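(* Let $P$ be a connected minuscule poset, i.e., $P$ is isomorphic to one of: $\mathbf{a}\times\mathbf{b}$ ($a,b\ge1$); the interval $[\varnothing,(b,b)]$ of Young's lattice ($b\ge1$); $P_{a,1,1,a}$ ($a\ge1$); $P(E_6)$; $P(E_7)$. Then $P$ is a distributive lattice, $P\cong J(Q)$ for a (unique) finite poset $Q$, and $P$ is tCDE (i.e., $J(Q)$ is tCDE).
   Context: $\mathbf{a}$ is the chain with $a$ elements; $\times$ is the direct product. Young's lattice: partitions ordered by componentwise $\le$. $P_{a,1,1,a}$ is the poset on $w_1,\ldots,w_a,x_1,y_1,z_1,\ldots,z_a$ with cover relations $w_1\lessdot\cdots\lessdot w_a$, $w_a\lessdot x_1$, $w_a\lessdot y_1$, $x_1\lessdot z_1$, $y_1\lessdot z_1$, $z_1\lessdot\cdots\lessdot z_a$. $P^{\mathrm{shift}}_{\delta_4}$ is the set of boxes $[i,j]$, $1\le i\le j\le4$, ordered componentwise; $P(E_6):=J(P^{\mathrm{shift}}_{\delta_4})$ and $P(E_7):=J(P(E_6))$. $J(Q)$ is the lattice of order ideals of $Q$ under inclusion; $\mathrm{ddeg}$ is the number of covered elements; $\mathrm{uni}$ is uniform. $\mathcal{T}^+_q(I)=1$ iff $q\notin I$ and $q$ minimal in $Q\setminus I$; $\mathcal{T}^-_q(I)=1$ iff $q\in I$ and $q$ maximal in $I$. $\mu$ on $J(Q)$ is toggle-symmetric if $\mathbb{E}(\mu;\mathcal{T}^+_q)=\mathbb{E}(\mu;\mathcal{T}^-_q)$ for all $q\in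 Q$; $J(Q)$ is tCDE if $\mathbb{E}(\mu;\mathrm{ddeg})=\mathbb{E}(\mathrm{uni}_{J(Q)};\mathrm{ddeg})$ for every toggle-symmetric $\mu$. *)

theory Defs
  imports Complex_Main
begin

definition partial_order_on' :: "'a set \<Rightarrow> ('a \<Rightarrow> 'a \<Rightarrow> bool) \<Rightarrow> bool" where
  "partial_order_on' P le \<longleftrightarrow>
     (\<forall>x\<in>P. le x x) \<and>
     (\<forall>x\<in>P. \<forall>y\<in>P. le x y \<and> le y x \<longrightarrow> x = y) \<and>
     (\<forall>x\<in>P. \<forall>y\<in>P. \<forall>z\<in>P. le x y \<and> le y z \<longrightarrow> le x z)"

definition finite_poset :: "'a set \<Rightarrow> ('a \<Rightarrow> 'a \<Rightarrow> bool) \<Rightarrow> bool" where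
  "finite_poset P le \<longleftrightarrow> finite P \<and> partial_order_on' P le"

definition poset_iso :: "'a set \<Rightarrow> ('a \<Rightarrow> 'a \<Rightarrow> bool) \<Rightarrow> 'b set \<Rightarrow> ('b \<Rightarrow> 'b \<Rightarrow> bool) \<Rightarrow> bool" where
  "poset_iso P leP R leR \<longleftrightarrow>
     (\<exists>f. bij_betw f P R \<and> (\<forall>x\<in>P. \<forall>y\<in>P. leP x y \<longleftrightarrow> leR (f x) (f y)))"

definition is_lub :: "'a set \<Rightarrow> ('a \<Rightarrow> 'a \<Rightarrow> bool) \<Rightarrow> 'a \<Rightarrow> 'a \<Rightarrow> 'a \<Rightarrow> bool" where
  "is_lub P le x y s \<longleftrightarrow> s \<in> P \<and> le x s \<and> le y s \<and> (\<forall>u\<in>P. le x u \<and> le y u \<longrightarrow> le s u)"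

definition is_glb :: "'a set \<Rightarrow> ('a \<Rightarrow> 'a \<Rightarrow> bool) \<Rightarrow> 'a \<Rightarrow> 'a \<Rightarrow> 'a \<Rightarrow> bool" where
  "is_glb P le x y m \<longleftrightarrow> m \<in> P \<and> le m x \<and> le m y \<and> (\<forall>u\<in>P. le u x \<and> le u y \<longrightarrow> le u m)"

definition pjoin :: "'a set \<Rightarrow> ('a \<Rightarrow> 'a \<Rightarrow> bool) \<Rightarrow> 'a \<Rightarrow> 'a \<Rightarrow> 'a" where
  "pjoin P le x y = (THE s. is_lub P le x y s)"

definition pmeet :: "'a set \<Rightarrow> ('a \<Rightarrow> 'a \<Rightarrow> bool) \<Rightarrow> 'a \<Rightarrow> 'a \<Rightarrow> 'a" where
  "pmeet P le x y = (THE m. is_glb P le x y m)"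

definition lattice_on :: "'a set \<Rightarrow> ('a \<Rightarrow> 'a \<Rightarrow> bool) \<Rightarrow> bool" where
  "lattice_on P le \<longleftrightarrow> partial_order_on' P le \<and>
     (\<forall>x\<in>P. \<forall>y\<in>P. (\<exists>s. is_lub P le x y s) \<and> (\<exists>m. is_glb P le x y m))"

definition distributive_lattice_on :: "'a set \<Rightarrow> ('a \<Rightarrow> 'a \<Rightarrow> bool) \<Rightarrow> bool" where
  "distributive_lattice_on P le \<longleftrightarrow> lattice_on P le \<and>
     (\<forall>x\<in>P. \<forall>y\<in>P. \<forall>z\<in>P.
        pmeet P le x (pjoin P le y z) = pjoin P le (pmeet P le x y) (pmeet P le x z))"

definition order_ideals :: "'a set \<Rightarrow> ('a \<Rightarrow> 'a \<Rightarrow> bool) \<Rightarrow> 'a set set" where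
  "order_ideals Q le = {I. I \<subseteq> Q \<and> (\<forall>x\<in>I. \<forall>y\<in>Q. le y x \<longrightarrow> y \<in> I)}"

definition toggle_plus :: "'a set \<Rightarrow> ('a \<Rightarrow> 'a \<Rightarrow> bool) \<Rightarrow> 'a \<Rightarrow> 'a set \<Rightarrow> real" where
  "toggle_plus Q le q I =
     (if q \<in> Q \<and> q \<notin> I \<and> (\<forall>p\<in>Q - I. le p q \<longrightarrow> p = q) then 1 else 0)"

definition toggle_minus :: "'a set \<Rightarrow> ('a \<Rightarrow> 'a \<Rightarrow> bool) \<Rightarrow> 'a \<Rightarrow> 'a set \<Rightarrow> real" where
  "toggle_minus Q le q I =
     (if q \<in> I \<and> (\<forall>p\<in>I. le q p \<longrightarrow> p = q) then 1 else 0)"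

definition ddeg :: "'a set \<Rightarrow> ('a \<Rightarrow> 'a \<Rightarrow> bool) \<Rightarrow> 'a set \<Rightarrow> real" where
  "ddeg Q le I = real (card {I' \<in> order_ideals Q le. I' \<subset> I \<and>
       \<not> (\<exists>K\<in>order_ideals Q le. I' \<subset> K \<and> K \<subset> I)})"

definition expect :: "'b set \<Rightarrow> ('b \<Rightarrow> real) \<Rightarrow> ('b \<Rightarrow> real) \<Rightarrow> real" where
  "expect L \<mu> f = (\<Sum>I\<in>L. \<mu> I * f I)"

definition prob_distr :: "'b set \<Rightarrow> ('b \<Rightarrow> real) \<Rightarrow> bool" where
  "prob_distr L \<mu> \<longleftrightarrow> (\<forall>I\<in>L. 0 \<le> \<mu> I) \<and> (\<Sum>I\<in>L. \<mu> I) = 1"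

definition uniform :: "'b set \<Rightarrow> 'b \<Rightarrow> real" where
  "uniform L I = 1 / real (card L)"

definition toggle_symmetric :: "'a set \<Rightarrow> ('a \<Rightarrow> 'a \<Rightarrow> bool) \<Rightarrow> ('a set \<Rightarrow> real) \<Rightarrow> bool" where
  "toggle_symmetric Q le \<mu> \<longleftrightarrow>
     (\<forall>q\<in>Q. expect (order_ideals Q le) \<mu> (toggle_plus Q le q)
            = expect (order_ideals Q le) \<mu> (toggle_minus Q le q))"

definition tCDE :: "'a set \<Rightarrow> ('a \<Rightarrow> 'a \<Rightarrow> bool) \<Rightarrow> bool" where
  "tCDE Q le \<longleftrightarrow>
     (\<forall>\<mu>. prob_distr (order_ideals Q le) \<mu> \<and> toggle_symmetric Q le \<mu> \<longrightarrow>
        expect (order_ideals Q le) \<mu> (ddeg Q le)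
        = expect (order_ideals Q le) (uniform (order_ideals Q le)) (ddeg Q le))"

definition chain_prod :: "nat \<Rightarrow> nat \<Rightarrow> (nat \<times> nat) set" where
  "chain_prod a b = {1..a} \<times> {1..b}"

definition prod_le :: "nat \<times> nat \<Rightarrow> nat \<times> nat \<Rightarrow> bool" where
  "prod_le p q \<longleftrightarrow> fst p \<le> fst q \<and> snd p \<le> snd q"

text \<open>Interval [empty,(b,b)] of Young's lattice: partitions are weakly decreasing
  nat sequences (finitely supported), ordered componentwise.\<close>
definition young_interval :: "nat \<Rightarrow> (nat \<Rightarrow> nat) set" where
  "young_interval b = {lam. antimono lam \<and> (\<forall>i. lam i \<le> (if i < 2 then b else 0))}"

datatype pelt = W nat | X | Y | Z nat

definition P_a11a :: "nat \<Rightarrow> pelt set" where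
  "P_a11a a = W ` {1..a} \<union> {X, Y} \<union> Z ` {1..a}"

definition cover_a11a :: "nat \<Rightarrow> pelt \<Rightarrow> pelt \<Rightarrow> bool" where
  "cover_a11a a u v \<longleftrightarrow>
     (\<exists>i. 1 \<le> i \<and> i < a \<and> u = W i \<and> v = W (Suc i)) \<or>
     (u = W a \<and> v = X) \<or> (u = W a \<and> v = Y) \<or>
     (u = X \<and> v = Z 1) \<or> (u = Y \<and> v = Z 1) \<or>
     (\<exists>i. 1 \<le> i \<and> i < a \<and> u = Z i \<and> v = Z (Suc i))"

definition le_a11a :: "nat \<Rightarrow> pelt \<Rightarrow> pelt \<Rightarrow> bool" where
  "le_a11a a = (cover_a11a a)\<^sup>*\<^sup>*"

definition shifted_delta4 :: "(nat \<times> nat) set" where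
  "shifted_delta4 = {(i, j). 1 \<le> i \<and> i \<le> j \<and> j \<le> 4}"

definition PE6 :: "(nat \<times> nat) set set" where
  "PE6 = order_ideals shifted_delta4 prod_le"

definition PE7 :: "(nat \<times> nat) set set set" where
  "PE7 = order_ideals PE6 (\<subseteq>)"

definition connected_minuscule :: "'a set \<Rightarrow> ('a \<Rightarrow> 'a \<Rightarrow> bool) \<Rightarrow> bool" where
  "connected_minuscule P le \<longleftrightarrow>
     (\<exists>a b. 1 \<le> a \<and> 1 \<le> b \<and> poset_iso P le (chain_prod a b) prod_le) \<or>
     (\<exists>b. 1 \<le> b \<and> poset_iso P le (young_interval b) (\<le>)) \<or>
     (\<exists>a. 1 \<le> a \<and> poset_iso P le (P_a11a a) (le_a11a a)) \<or>
     poset_iso P le PE6 (\<subseteq>) \<or>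
     poset_iso P le PE7 (\<subseteq>)"

end

theory Submission
  imports Defs
begin

text \<open>Each connected minuscule poset is explicitly isomorphic to the lattice \<open>J(Q)\<close> of order
  ideals of a small poset \<open>Q\<close>: two disjoint chains for \<open>a \<times> b\<close>, the product \<open>2 \<times> b\<close> for
  the Young interval, \<open>P\<^sub>a\<^sub>-\<^sub>1\<^sub>,\<^sub>1\<^sub>,\<^sub>1\<^sub>,\<^sub>a\<^sub>-\<^sub>1\<close> for
  \<open>P\<^sub>a\<^sub>,\<^sub>1\<^sub>,\<^sub>1\<^sub>,\<^sub>a\<close>, the shifted staircase for \<open>P(E\<^sub>6)\<close> and \<open>P(E\<^sub>6)\<close>
  itself for \<open>P(E\<^sub>7)\<close>. Such a lattice is distributive, its joins and meets being unions and
  intersections, and \<open>Q\<close> is recovered from \<open>J(Q)\<close> as the ideals with exactly one lower cover.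
  Since \<open>ddeg = \<Sum>\<^sub>q T\<^sup>-\<^sub>q\<close> and every toggle-symmetric distribution, the uniform one
  included, gives each \<open>T\<^sup>+\<^sub>q - T\<^sup>-\<^sub>q\<close> expectation zero, the tCDE property follows from an
  expansion \<open>ddeg = C + \<Sum>\<^sub>q c\<^sub>q (T\<^sup>+\<^sub>q - T\<^sup>-\<^sub>q)\<close> on \<open>J(Q)\<close>; explicit coefficients
  \<open>c\<^sub>q\<close> are given for every family.\<close>

section \<open>Order ideals, lower covers and toggles\<close>

lemma partial_order_on'_refl: "partial_order_on' Q le \<Longrightarrow> x \<in> Q \<Longrightarrow> le x x"
  unfolding partial_order_on'_def by blast

lemma partial_order_on'_antisym:
  "partial_order_on' Q le \<Longrightarrow> x \<in> Q \<Longrightarrow> y \<in> Q \<Longrightarrow> le x y \<Longrightarrow> le y x \<Longrightarrow> x = y"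
  unfolding partial_order_on'_def by blast

lemma partial_order_on'_trans:
  "partial_order_on' Q le \<Longrightarrow> x \<in> Q \<Longrightarrow> y \<in> Q \<Longrightarrow> z \<in> Q \<Longrightarrow> le x y \<Longrightarrow> le y z \<Longrightarrow> le x z"
  unfolding partial_order_on'_def by blast

lemma partial_order_on'_converse: "partial_order_on' Q le \<Longrightarrow> partial_order_on' Q (\<lambda>x y. le y x)"
  unfolding partial_order_on'_def by blast

lemma partial_order_on'_subset: "partial_order_on' Q le \<Longrightarrow> S \<subseteq> Q \<Longrightarrow> partial_order_on' S le"
  unfolding partial_order_on'_def by blast

lemma partial_order_on'_subseteq: "partial_order_on' A (\<subseteq>)"
  unfolding partial_order_on'_def by blast

lemma partial_order_on'_prod_le: "partial_order_on' A prod_le"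
  unfolding partial_order_on'_def prod_le_def by (auto simp: prod_eq_iff)

lemma finite_has_minimal_wrt:
  assumes "finite S" "S \<noteq> {}" "S \<subseteq> Q" "partial_order_on' Q le"
  shows "\<exists>m\<in>S. \<forall>p\<in>S. le p m \<longrightarrow> p = m"
  using assms
proof (induction S rule: finite_ne_induct)
  case (singleton x)
  then show ?case by auto
next
  case (insert x F)
  then obtain m where m: "m \<in> F" "\<forall>p\<in>F. le p m \<longrightarrow> p = m" by auto
  show ?case
  proof (cases "le x m")
    case True
    have "p = x" if "p \<in> insert x F" "le p x" for p
    proof (rule ccontr)
      assume "p \<noteq> x"
      with that m True insert.prems have "p = m"
        using partial_order_on'_trans[of Q le p x m] by auto
      with that True insert.prems m(1) have "x = m"
        using partial_order_on'_antisym[of Q le x m] by auto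
      with m(1) insert.hyps(3) show False by simp
    qed
    then show ?thesis by blast
  next
    case False
    with m show ?thesis by auto
  qed
qed

lemma finite_has_maximal_wrt:
  assumes "finite S" "S \<noteq> {}" "S \<subseteq> Q" "partial_order_on' Q le"
  shows "\<exists>m\<in>S. \<forall>p\<in>S. le m p \<longrightarrow> p = m"
  using finite_has_minimal_wrt[OF assms(1-3) partial_order_on'_converse[OF assms(4)]] by auto

lemma order_ideals_subset: "I \<in> order_ideals Q le \<Longrightarrow> I \<subseteq> Q"
  by (simp add: order_ideals_def)

lemma order_ideals_downward:
  "I \<in> order_ideals Q le \<Longrightarrow> x \<in> I \<Longrightarrow> y \<in> Q \<Longrightarrow> le y x \<Longrightarrow> y \<in> I"
  by (auto simp: order_ideals_def)

lemma finite_order_ideals: "finite Q \<Longrightarrow> finite (order_ideals Q le)"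
  by (rule finite_subset[of _ "Pow Q"]) (auto simp: order_ideals_def)

lemma empty_in_order_ideals: "{} \<in> order_ideals Q le"
  by (simp add: order_ideals_def)

lemma Un_in_order_ideals:
  "I \<in> order_ideals Q le \<Longrightarrow> K \<in> order_ideals Q le \<Longrightarrow> I \<union> K \<in> order_ideals Q le"
  unfolding order_ideals_def by blast

lemma Int_in_order_ideals:
  "I \<in> order_ideals Q le \<Longrightarrow> K \<in> order_ideals Q le \<Longrightarrow> I \<inter> K \<in> order_ideals Q le"
  unfolding order_ideals_def by blast

definition maximal_elements :: "('a \<Rightarrow> 'a \<Rightarrow> bool) \<Rightarrow> 'a set \<Rightarrow> 'a set" where
  "maximal_elements le I = {q\<in>I. \<forall>p\<in>I. le q p \<longrightarrow> p = q}"

lemma insert_minimal_in_order_ideals: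
  assumes "I \<in> order_ideals Q le" "q \<in> Q" "\<forall>p\<in>Q - I. le p q \<longrightarrow> p = q"
  shows "insert q I \<in> order_ideals Q le"
  using assms unfolding order_ideals_def by blast

lemma Diff_maximal_in_order_ideals:
  assumes "I \<in> order_ideals Q le" "q \<in> maximal_elements le I"
  shows "I - {q} \<in> order_ideals Q le"
  using assms unfolding order_ideals_def maximal_elements_def by blast

definition lower_covers :: "'a set \<Rightarrow> ('a \<Rightarrow> 'a \<Rightarrow> bool) \<Rightarrow> 'a set \<Rightarrow> 'a set set" where
  "lower_covers Q le I = {K \<in> order_ideals Q le. K \<subset> I \<and> \<not> (\<exists>L\<in>order_ideals Q le. K \<subset> L \<and> L \<subset> I)}"

text \<open>If \<open>K \<subset> I\<close>, adding to \<open>K\<close> a minimal element of \<open>I - K\<close> gives an ideal between \<open>K\<close>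
  and \<open>I\<close>.\<close>

lemma lower_covers_eq:
  assumes "finite Q" "partial_order_on' Q le" "I \<in> order_ideals Q le"
  shows "lower_covers Q le I = (\<lambda>q. I - {q}) ` maximal_elements le I"
proof
  have IQ: "I \<subseteq> Q" using assms(3) by (rule order_ideals_subset)
  show "lower_covers Q le I \<subseteq> (\<lambda>q. I - {q}) ` maximal_elements le I"
  proof
    fix K assume "K \<in> lower_covers Q le I"
    then have K: "K \<in> order_ideals Q le" "K \<subset> I"
      and cover: "\<not> (\<exists>L\<in>order_ideals Q le. K \<subset> L \<and> L \<subset> I)"
      by (auto simp: lower_covers_def)
    have "finite (I - K)" using IQ assms(1) finite_subset by blast
    moreover have "I - K \<noteq> {}" using K(2) by blast
    ultimately obtain m where m: "m \<in> I - K" "\<forall>p\<in>I - K. le p m \<longrightarrow> p = m"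
      using finite_has_minimal_wrt[of "I - K" Q le] IQ assms(2) by blast
    have "insert m K \<in> order_ideals Q le"
      using K(1) assms(3) m IQ unfolding order_ideals_def by blast
    moreover have "K \<subset> insert m K" "insert m K \<subseteq> I" using m K(2) by auto
    ultimately have I_eq: "insert m K = I" using cover by blast
    have "m \<in> maximal_elements le I"
      using I_eq m K(1) IQ unfolding maximal_elements_def order_ideals_def by blast
    moreover have "K = I - {m}" using I_eq m by auto
    ultimately show "K \<in> (\<lambda>q. I - {q}) ` maximal_elements le I" by blast
  qed
  show "(\<lambda>q. I - {q}) ` maximal_elements le I \<subseteq> lower_covers Q le I"
    using Diff_maximal_in_order_ideals[OF assms(3)]
    by (auto simp: lower_covers_def maximal_elements_def)
qed

lemma card_lower_covers:
  assumes "finite Q" "partial_order_on' Q le" "I \<in> order_ideals Q le"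
  shows "card (lower_covers Q le I) = card (maximal_elements le I)"
proof -
  have "inj_on (\<lambda>q. I - {q}) (maximal_elements le I)"
    by (rule inj_onI) (auto simp: maximal_elements_def)
  then show ?thesis unfolding lower_covers_eq[OF assms] by (rule card_image)
qed

lemma sum_indicator_eq_card:
  "finite A \<Longrightarrow> (\<Sum>x\<in>A. if P x then 1 else 0 :: real) = real (card {x\<in>A. P x})"
  by (simp add: sum.If_cases Int_def)

lemma ddeg_eq_sum_toggle_minus:
  assumes "finite Q" "partial_order_on' Q le" "I \<in> order_ideals Q le"
  shows "ddeg Q le I = (\<Sum>q\<in>Q. toggle_minus Q le q I)"
proof -
  have "ddeg Q le I = real (card (maximal_elements le I))"
    using card_lower_covers[OF assms] by (simp add: ddeg_def lower_covers_def)
  also have "maximal_elements le I = {q\<in>Q. q \<in> I \<and> (\<forall>p\<in>I. le q p \<longrightarrow> p = q)}"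
    using order_ideals_subset[OF assms(3)] by (auto simp: maximal_elements_def)
  finally show ?thesis
    unfolding toggle_minus_def using sum_indicator_eq_card[OF assms(1)] by simp
qed

text \<open>Toggling \<open>q\<close> in and out is a bijection between the ideals where \<open>q\<close> can be added
  and those where it can be removed, so the uniform distribution is toggle-symmetric.\<close>

lemma sum_toggle_plus_eq_sum_toggle_minus:
  assumes "finite Q" "partial_order_on' Q le" "q \<in> Q"
  shows "(\<Sum>I\<in>order_ideals Q le. toggle_plus Q le q I) = (\<Sum>I\<in>order_ideals Q le. toggle_minus Q le q I)"
proof -
  let ?J = "order_ideals Q le"
  let ?A = "{I\<in>?J. q \<in> Q \<and> q \<notin> I \<and> (\<forall>p\<in>Q - I. le p q \<longrightarrow> p = q)}"
  let ?B = "{I\<in>?J. q \<in> I \<and> (\<forall>p\<in>I. le q p \<longrightarrow> p = q)}"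
  have "bij_betw (insert q) ?A ?B"
  proof (rule bij_betw_byWitness[where f' = "\<lambda>I. I - {q}"])
    show "\<forall>I\<in>?A. insert q I - {q} = I" "\<forall>I\<in>?B. insert q (I - {q}) = I" by auto
    show "insert q ` ?A \<subseteq> ?B"
    proof
      fix K assume "K \<in> insert q ` ?A"
      then obtain I where I: "I \<in> ?A" "K = insert q I" by auto
      have "K \<in> ?J" using insert_minimal_in_order_ideals[of I Q le q] I by simp
      moreover have "p = q" if "p \<in> K" "le q p" for p
      proof (rule ccontr)
        assume "p \<noteq> q"
        then have "p \<in> I" using that I(2) by simp
        then have "q \<in> I" using order_ideals_downward[of I Q le p q] I(1) assms(3) that(2) by simp
        then show False using I(1) by simp
      qed
      ultimately show "K \<in> ?B" using I(2) by simp
    qed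
    show "(\<lambda>I. I - {q}) ` ?B \<subseteq> ?A"
    proof
      fix K assume "K \<in> (\<lambda>I. I - {q}) ` ?B"
      then obtain I where I: "I \<in> ?B" "K = I - {q}" by auto
      have "K \<in> ?J"
        using I Diff_maximal_in_order_ideals[of I Q le q] by (simp add: maximal_elements_def)
      moreover have "p = q" if "p \<in> Q - K" "le p q" for p
      proof (rule ccontr)
        assume "p \<noteq> q"
        then have "p \<notin> I" using that(1) I(2) by simp
        then show False using order_ideals_downward[of I Q le q p] I(1) that by simp
      qed
      ultimately show "K \<in> ?A" using I(2) assms(3) by simp
    qed
  qed
  then have "card ?A = card ?B" by (rule bij_betw_same_card)
  then show ?thesis
    unfolding toggle_plus_def toggle_minus_def
    using sum_indicator_eq_card[OF finite_order_ideals[OF assms(1)]] by simp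
qed

lemma toggle_minus_eq_1I: "q \<in> I \<Longrightarrow> (\<forall>p\<in>I. le q p \<longrightarrow> p = q) \<Longrightarrow> toggle_minus Q le q I = 1"
  by (simp add: toggle_minus_def)

lemma toggle_minus_eq_0I_notin: "q \<notin> I \<Longrightarrow> toggle_minus Q le q I = 0"
  by (simp add: toggle_minus_def)

lemma toggle_minus_eq_0I_above: "p \<in> I \<Longrightarrow> le q p \<Longrightarrow> p \<noteq> q \<Longrightarrow> toggle_minus Q le q I = 0"
  unfolding toggle_minus_def by auto

lemma toggle_plus_eq_1I:
  "q \<in> Q \<Longrightarrow> q \<notin> I \<Longrightarrow> (\<forall>p\<in>Q. p \<notin> I \<longrightarrow> le p q \<longrightarrow> p = q) \<Longrightarrow> toggle_plus Q le q I = 1"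
  unfolding toggle_plus_def by auto

lemma toggle_plus_eq_0I_mem: "q \<in> I \<Longrightarrow> toggle_plus Q le q I = 0"
  by (simp add: toggle_plus_def)

lemma toggle_plus_eq_0I_below: "p \<in> Q \<Longrightarrow> p \<notin> I \<Longrightarrow> le p q \<Longrightarrow> p \<noteq> q \<Longrightarrow> toggle_plus Q le q I = 0"
  unfolding toggle_plus_def by auto

definition ddeg_toggle_expansion ::
    "'a set \<Rightarrow> ('a \<Rightarrow> 'a \<Rightarrow> bool) \<Rightarrow> ('a \<Rightarrow> real) \<Rightarrow> real \<Rightarrow> bool" where
  "ddeg_toggle_expansion Q le c C \<longleftrightarrow> (\<forall>I\<in>order_ideals Q le.
     ddeg Q le I = C + (\<Sum>q\<in>Q. c q * (toggle_plus Q le q I - toggle_minus Q le q I)))"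

lemma ddeg_toggle_expansion_iff:
  assumes "finite Q" "partial_order_on' Q le"
  shows "ddeg_toggle_expansion Q le c C \<longleftrightarrow> (\<forall>I\<in>order_ideals Q le.
     (\<Sum>q\<in>Q. (1 + c q) * toggle_minus Q le q I - c q * toggle_plus Q le q I) = C)"
proof -
  have "(\<Sum>q\<in>Q. (1 + c q) * toggle_minus Q le q I - c q * toggle_plus Q le q I)
      = ddeg Q le I - (\<Sum>q\<in>Q. c q * (toggle_plus Q le q I - toggle_minus Q le q I))"
    if "I \<in> order_ideals Q le" for I
    unfolding ddeg_eq_sum_toggle_minus[OF assms that] sum_subtractf[symmetric]
    by (rule sum.cong) (auto simp: algebra_simps)
  then show ?thesis unfolding ddeg_toggle_expansion_def by auto
qed

lemma expect_ddeg_eq_if_toggle_expansion: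
  assumes "ddeg_toggle_expansion Q le c C"
    and sym: "\<forall>q\<in>Q. expect (order_ideals Q le) \<mu> (toggle_plus Q le q)
                    = expect (order_ideals Q le) \<mu> (toggle_minus Q le q)"
    and total: "(\<Sum>I\<in>order_ideals Q le. \<mu> I) = 1"
  shows "expect (order_ideals Q le) \<mu> (ddeg Q le) = C"
proof -
  let ?J = "order_ideals Q le"
  let ?d = "\<lambda>q I. toggle_plus Q le q I - toggle_minus Q le q I"
  have "expect ?J \<mu> (ddeg Q le) = (\<Sum>I\<in>?J. \<mu> I * (C + (\<Sum>q\<in>Q. c q * ?d q I)))"
    using assms(1) unfolding expect_def ddeg_toggle_expansion_def by (intro sum.cong) auto
  also have "\<dots> = C * (\<Sum>I\<in>?J. \<mu> I) + (\<Sum>I\<in>?J. \<Sum>q\<in>Q. c q * (\<mu> I * ?d q I))"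
    by (simp add: algebra_simps sum.distrib sum_distrib_left sum_distrib_right)
  also have "(\<Sum>I\<in>?J. \<Sum>q\<in>Q. c q * (\<mu> I * ?d q I)) = (\<Sum>q\<in>Q. c q * (\<Sum>I\<in>?J. \<mu> I * ?d q I))"
    by (subst sum.swap) (simp add: sum_distrib_left)
  also have "(\<Sum>q\<in>Q. c q * (\<Sum>I\<in>?J. \<mu> I * ?d q I)) = 0"
    using sym by (intro sum.neutral) (simp add: expect_def right_diff_distrib sum_subtractf)
  finally show ?thesis using total by simp
qed

lemma tCDE_if_ddeg_toggle_expansion:
  assumes "finite Q" "partial_order_on' Q le" "ddeg_toggle_expansion Q le c C"
  shows "tCDE Q le"
proof -
  let ?J = "order_ideals Q le"
  have "card ?J \<noteq> 0"
    using finite_order_ideals[OF assms(1)] empty_in_order_ideals[of Q le] by auto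
  then have "expect ?J (uniform ?J) (ddeg Q le) = C"
    using sum_toggle_plus_eq_sum_toggle_minus[OF assms(1,2)]
    by (intro expect_ddeg_eq_if_toggle_expansion[OF assms(3)])
       (simp_all add: expect_def uniform_def sum_divide_distrib[symmetric])
  then show ?thesis
    using expect_ddeg_eq_if_toggle_expansion[OF assms(3)]
    by (simp add: tCDE_def prob_distr_def toggle_symmetric_def)
qed

section \<open>Invariance under isomorphism\<close>

lemma poset_iso_sym:
  assumes "poset_iso P le R leR"
  shows "poset_iso R leR P le"
proof -
  obtain f where f: "bij_betw f P R" "\<forall>x\<in>P. \<forall>y\<in>P. le x y \<longleftrightarrow> leR (f x) (f y)"
    using assms by (auto simp: poset_iso_def)
  let ?g = "inv_into P f"
  have g: "bij_betw ?g R P" using f(1) by (rule bij_betw_inv_into)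
  have "leR x y \<longleftrightarrow> le (?g x) (?g y)" if "x \<in> R" "y \<in> R" for x y
  proof -
    have "?g x \<in> P" "?g y \<in> P" using g that bij_betwE by blast+
    then show ?thesis using f(2) bij_betw_inv_into_right[OF f(1)] that by metis
  qed
  then show ?thesis using g unfolding poset_iso_def by blast
qed

lemma poset_iso_trans:
  assumes "poset_iso P le R leR" "poset_iso R leR S leS"
  shows "poset_iso P le S leS"
proof -
  obtain f where f: "bij_betw f P R" "\<forall>x\<in>P. \<forall>y\<in>P. le x y \<longleftrightarrow> leR (f x) (f y)"
    using assms(1) by (auto simp: poset_iso_def)
  obtain g where g: "bij_betw g R S" "\<forall>x\<in>R. \<forall>y\<in>R. leR x y \<longleftrightarrow> leS (g x) (g y)"
    using assms(2) by (auto simp: poset_iso_def)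
  have "bij_betw (g \<circ> f) P S" using f(1) g(1) by (rule bij_betw_trans)
  moreover have "\<forall>x\<in>P. \<forall>y\<in>P. le x y \<longleftrightarrow> leS ((g \<circ> f) x) ((g \<circ> f) y)"
    using f g bij_betwE[OF f(1)] by auto
  ultimately show ?thesis unfolding poset_iso_def by blast
qed

lemma poset_iso_partial_order_on':
  assumes "poset_iso P le R leR" "partial_order_on' R leR"
  shows "partial_order_on' P le"
proof -
  obtain f where f: "bij_betw f P R" "\<forall>x\<in>P. \<forall>y\<in>P. le x y \<longleftrightarrow> leR (f x) (f y)"
    using assms by (auto simp: poset_iso_def)
  have fR: "f x \<in> R" if "x \<in> P" for x using f(1) that by (simp add: bij_betwE)
  have inj: "x = y" if "x \<in> P" "y \<in> P" "f x = f y" for x y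
    using f(1) that by (auto simp: bij_betw_def inj_on_def)
  show ?thesis
    unfolding partial_order_on'_def
  proof (intro conjI ballI impI)
    show "le x x" if "x \<in> P" for x
      using that f(2) fR partial_order_on'_refl[OF assms(2)] by blast
    show "x = y" if "x \<in> P" "y \<in> P" "le x y \<and> le y x" for x y
      using that f(2) fR inj partial_order_on'_antisym[OF assms(2)] by blast
    show "le x z" if "x \<in> P" "y \<in> P" "z \<in> P" "le x y \<and> le y z" for x y z
      using that f(2) fR partial_order_on'_trans[OF assms(2), of "f x" "f y" "f z"] by blast
  qed
qed

lemma poset_iso_finite: "poset_iso P le R leR \<Longrightarrow> finite R \<Longrightarrow> finite P"
  unfolding poset_iso_def using bij_betw_finite by blast

lemma image_in_order_ideals:
  assumes "bij_betw f Q0 Q" "\<forall>x\<in>Q0. \<forall>y\<in>Q0. le0 x y \<longleftrightarrow> le (f x) (f y)"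
    and I: "I \<in> order_ideals Q0 le0"
  shows "f ` I \<in> order_ideals Q le"
proof -
  have IQ0: "I \<subseteq> Q0" using I by (rule order_ideals_subset)
  have "f ` I \<subseteq> Q" using IQ0 assms(1) by (auto simp: bij_betw_def)
  moreover have "y \<in> f ` I" if xy: "x \<in> I" "y \<in> Q" "le y (f x)" for x y
  proof -
    obtain y0 where y0: "y0 \<in> Q0" "y = f y0" using xy(2) assms(1) by (auto simp: bij_betw_def)
    then have "le0 y0 x" using assms(2) xy IQ0 by auto
    then show ?thesis using order_ideals_downward[OF I xy(1) y0(1)] y0(2) by simp
  qed
  ultimately show ?thesis unfolding order_ideals_def by blast
qed

lemma bij_betw_image_order_ideals:
  assumes f: "bij_betw f Q0 Q" "\<forall>x\<in>Q0. \<forall>y\<in>Q0. le0 x y \<longleftrightarrow> le (f x) (f y)"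
  shows "bij_betw (image f) (order_ideals Q0 le0) (order_ideals Q le)"
proof -
  let ?g = "inv_into Q0 f"
  have g: "bij_betw ?g Q Q0" using f(1) by (rule bij_betw_inv_into)
  have fg: "f (?g x) = x" if "x \<in> Q" for x using f(1) that by (rule bij_betw_inv_into_right)
  have g_le: "\<forall>x\<in>Q. \<forall>y\<in>Q. le x y \<longleftrightarrow> le0 (?g x) (?g y)"
  proof (intro ballI)
    fix x y assume "x \<in> Q" "y \<in> Q"
    moreover have "?g x \<in> Q0" "?g y \<in> Q0" using g calculation by (simp_all add: bij_betwE)
    ultimately show "le x y \<longleftrightarrow> le0 (?g x) (?g y)" using f(2) fg by metis
  qed
  have "inj_on (image f) (order_ideals Q0 le0)"
  proof (rule inj_onI)
    fix I K assume "I \<in> order_ideals Q0 le0" "K \<in> order_ideals Q0 le0" "f ` I = f ` K"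
    moreover have "inj_on f Q0" using f(1) by (simp add: bij_betw_def)
    ultimately show "I = K" using inj_on_image_eq_iff order_ideals_subset by metis
  qed
  moreover have "I \<in> image f ` order_ideals Q0 le0" if "I \<in> order_ideals Q le" for I
  proof -
    have "f ` ?g ` I = I"
      using order_ideals_subset[OF that] fg by (force simp: image_image)
    then show ?thesis using image_in_order_ideals[OF g g_le that] by blast
  qed
  ultimately show ?thesis
    unfolding bij_betw_def using image_in_order_ideals[OF f] by blast
qed

lemma image_subset_image_order_ideals:
  assumes "bij_betw f Q0 Q" "I \<in> order_ideals Q0 le0" "K \<in> order_ideals Q0 le0"
  shows "f ` I \<subseteq> f ` K \<longleftrightarrow> I \<subseteq> K"
  using assms order_ideals_subset[OF assms(2)] order_ideals_subset[OF assms(3)]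
  unfolding bij_betw_def inj_on_def by blast

lemma poset_iso_order_ideals:
  assumes "poset_iso Q0 le0 Q le"
  shows "poset_iso (order_ideals Q0 le0) (\<subseteq>) (order_ideals Q le) (\<subseteq>)"
proof -
  obtain f where f: "bij_betw f Q0 Q" "\<forall>x\<in>Q0. \<forall>y\<in>Q0. le0 x y \<longleftrightarrow> le (f x) (f y)"
    using assms by (auto simp: poset_iso_def)
  show ?thesis
    unfolding poset_iso_def
    using bij_betw_image_order_ideals[OF f] image_subset_image_order_ideals[OF f(1)] by blast
qed

lemma toggles_image:
  assumes "bij_betw f Q0 Q" "\<forall>x\<in>Q0. \<forall>y\<in>Q0. le0 x y \<longleftrightarrow> le (f x) (f y)"
    and "I \<in> order_ideals Q0 le0" "q \<in> Q0"
  shows "toggle_minus Q le (f q) (f ` I) = toggle_minus Q0 le0 q I"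
    and "toggle_plus Q le (f q) (f ` I) = toggle_plus Q0 le0 q I"
proof -
  have I: "I \<subseteq> Q0" using assms(3) by (rule order_ideals_subset)
  have inj: "inj_on f Q0" and Q: "Q = f ` Q0" using assms(1) by (auto simp: bij_betw_def)
  have QI: "Q - f ` I = f ` (Q0 - I)" using inj_on_image_set_diff[OF inj _ I] Q by simp
  have eq: "f p = f q \<longleftrightarrow> p = q" and le: "le (f q) (f p) \<longleftrightarrow> le0 q p" "le (f p) (f q) \<longleftrightarrow> le0 p q"
    if "p \<in> Q0" for p
    using inj that assms(2,4) by (auto simp: inj_on_def)
  have mem: "f q \<in> f ` I \<longleftrightarrow> q \<in> I" using inj I assms(4) by (auto simp: inj_on_def)
  have "(\<forall>p\<in>f ` I. le (f q) p \<longrightarrow> p = f q) \<longleftrightarrow> (\<forall>p\<in>I. le (f q) (f p) \<longrightarrow> f p = f q)"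
    by simp
  also have "\<dots> \<longleftrightarrow> (\<forall>p\<in>I. le0 q p \<longrightarrow> p = q)" using I eq le(1) by blast
  finally show "toggle_minus Q le (f q) (f ` I) = toggle_minus Q0 le0 q I"
    unfolding toggle_minus_def mem by simp
  have "(\<forall>p\<in>Q - f ` I. le p (f q) \<longrightarrow> p = f q) \<longleftrightarrow> (\<forall>p\<in>Q0 - I. le (f p) (f q) \<longrightarrow> f p = f q)"
    unfolding QI by simp
  also have "\<dots> \<longleftrightarrow> (\<forall>p\<in>Q0 - I. le0 p q \<longrightarrow> p = q)" using eq le(2) by blast
  finally show "toggle_plus Q le (f q) (f ` I) = toggle_plus Q0 le0 q I"
    unfolding toggle_plus_def mem using Q assms(4) by simp
qed

lemma ddeg_toggle_expansion_transfer:
  assumes iso: "poset_iso Q0 le0 Q le" and Q0: "finite Q0" "partial_order_on' Q0 le0"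
    and exp: "ddeg_toggle_expansion Q0 le0 c C"
  shows "\<exists>c'. ddeg_toggle_expansion Q le c' C"
proof -
  obtain f where f: "bij_betw f Q0 Q" "\<forall>x\<in>Q0. \<forall>y\<in>Q0. le0 x y \<longleftrightarrow> le (f x) (f y)"
    using iso by (auto simp: poset_iso_def)
  have inj: "inj_on f Q0" and Q: "Q = f ` Q0" using f(1) by (auto simp: bij_betw_def)
  have Q_po: "finite Q" "partial_order_on' Q le"
    using Q0 poset_iso_partial_order_on'[OF poset_iso_sym[OF iso]] Q by auto
  let ?c = "c \<circ> inv_into Q0 f"
  have "(\<Sum>q\<in>Q. (1 + ?c q) * toggle_minus Q le q K - ?c q * toggle_plus Q le q K) = C"
    if K: "K \<in> order_ideals Q le" for K
  proof -
    obtain I where I: "I \<in> order_ideals Q0 le0" "K = f ` I"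
      using K bij_betw_image_order_ideals[OF f] unfolding bij_betw_def by blast
    have "(\<Sum>q\<in>Q. (1 + ?c q) * toggle_minus Q le q K - ?c q * toggle_plus Q le q K)
        = (\<Sum>q\<in>Q0. (1 + c q) * toggle_minus Q0 le0 q I - c q * toggle_plus Q0 le0 q I)"
      unfolding sum.reindex_bij_betw[OF f(1), symmetric]
      using toggles_image[OF f I(1)] inv_into_f_f[OF inj] by (intro sum.cong) (simp_all add: I(2))
    also have "\<dots> = C" using exp I(1) ddeg_toggle_expansion_iff[OF Q0] by blast
    finally show ?thesis .
  qed
  then show ?thesis using ddeg_toggle_expansion_iff[OF Q_po] by blast
qed

section \<open>Distributivity of \<open>J(Q)\<close> and uniqueness of \<open>Q\<close>\<close>

lemma pjoin_eqI: "partial_order_on' P le \<Longrightarrow> is_lub P le x y s \<Longrightarrow> pjoin P le x y = s"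
  unfolding pjoin_def is_lub_def by (rule the_equality) (auto intro: partial_order_on'_antisym)

lemma pmeet_eqI: "partial_order_on' P le \<Longrightarrow> is_glb P le x y m \<Longrightarrow> pmeet P le x y = m"
  unfolding pmeet_def is_glb_def by (rule the_equality) (auto intro: partial_order_on'_antisym)

lemma distributive_lattice_on_if_iso_order_ideals:
  assumes "poset_iso P le (order_ideals Q le0) (\<subseteq>)"
  shows "distributive_lattice_on P le"
proof -
  let ?J = "order_ideals Q le0"
  obtain f where f: "bij_betw f P ?J" "\<forall>x\<in>P. \<forall>y\<in>P. le x y \<longleftrightarrow> f x \<subseteq> f y"
    using assms by (auto simp: poset_iso_def)
  have P: "partial_order_on' P le"
    using assms partial_order_on'_subseteq by (rule poset_iso_partial_order_on')
  have le_iff: "le x y \<longleftrightarrow> f x \<subseteq> f y" if "x \<in> P" "y \<in> P" for x y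
    using f(2) that by simp
  have fP: "f x \<in> ?J" if "x \<in> P" for x using f(1) that by (simp add: bij_betwE)
  have onto: "\<exists>s\<in>P. f s = A" if "A \<in> ?J" for A
    using f(1) that unfolding bij_betw_def by (metis imageE)
  have inj: "x = y" if "x \<in> P" "y \<in> P" "f x = f y" for x y
    using f(1) that by (auto simp: bij_betw_def inj_on_def)
  have join: "pjoin P le x y \<in> P \<and> f (pjoin P le x y) = f x \<union> f y \<and> is_lub P le x y (pjoin P le x y)"
    if xy: "x \<in> P" "y \<in> P" for x y
  proof -
    obtain s where s: "s \<in> P" "f s = f x \<union> f y"
      using onto[OF Un_in_order_ideals[OF fP[OF xy(1)] fP[OF xy(2)]]] by blast
    then have "is_lub P le x y s" unfolding is_lub_def using xy by (auto simp: le_iff)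
    then show ?thesis using pjoin_eqI[OF P] s by simp
  qed
  have meet: "pmeet P le x y \<in> P \<and> f (pmeet P le x y) = f x \<inter> f y \<and> is_glb P le x y (pmeet P le x y)"
    if xy: "x \<in> P" "y \<in> P" for x y
  proof -
    obtain m where m: "m \<in> P" "f m = f x \<inter> f y"
      using onto[OF Int_in_order_ideals[OF fP[OF xy(1)] fP[OF xy(2)]]] by blast
    then have "is_glb P le x y m" unfolding is_glb_def using xy by (auto simp: le_iff)
    then show ?thesis using pmeet_eqI[OF P] m by simp
  qed
  have "lattice_on P le"
    unfolding lattice_on_def using P join meet by blast
  moreover have "pmeet P le x (pjoin P le y z) = pjoin P le (pmeet P le x y) (pmeet P le x z)"
    if "x \<in> P" "y \<in> P" "z \<in> P" for x y z
  proof (rule inj)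
    show "f (pmeet P le x (pjoin P le y z)) = f (pjoin P le (pmeet P le x y) (pmeet P le x z))"
      using that join meet by (simp add: Int_Un_distrib)
  qed (use that join meet in simp_all)
  ultimately show ?thesis unfolding distributive_lattice_on_def by blast
qed

definition principal_ideal :: "'a set \<Rightarrow> ('a \<Rightarrow> 'a \<Rightarrow> bool) \<Rightarrow> 'a \<Rightarrow> 'a set" where
  "principal_ideal Q le q = {p\<in>Q. le p q}"

lemma mem_principal_ideal: "q \<in> principal_ideal Q le v \<longleftrightarrow> q \<in> Q \<and> le q v"
  by (simp add: principal_ideal_def)

lemma principal_ideal_in_order_ideals:
  "partial_order_on' Q le \<Longrightarrow> q \<in> Q \<Longrightarrow> principal_ideal Q le q \<in> order_ideals Q le"
  unfolding principal_ideal_def order_ideals_def partial_order_on'_def by blast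

lemma principal_ideal_subset_iff:
  "partial_order_on' Q le \<Longrightarrow> x \<in> Q \<Longrightarrow> y \<in> Q \<Longrightarrow>
    principal_ideal Q le x \<subseteq> principal_ideal Q le y \<longleftrightarrow> le x y"
  unfolding principal_ideal_def partial_order_on'_def by blast

lemma principal_ideal_inject:
  "partial_order_on' Q le \<Longrightarrow> x \<in> Q \<Longrightarrow> y \<in> Q \<Longrightarrow>
    principal_ideal Q le x = principal_ideal Q le y \<longleftrightarrow> x = y"
  by (metis principal_ideal_subset_iff partial_order_on'_antisym order_refl)

lemma maximal_elements_principal_ideal:
  "partial_order_on' Q le \<Longrightarrow> q \<in> Q \<Longrightarrow> maximal_elements le (principal_ideal Q le q) = {q}"
  unfolding maximal_elements_def principal_ideal_def partial_order_on'_def by blast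

lemma card_maximal_elements_eq_1_iff:
  assumes "finite Q" "partial_order_on' Q le" "I \<in> order_ideals Q le"
  shows "card (maximal_elements le I) = 1 \<longleftrightarrow> (\<exists>q\<in>Q. I = principal_ideal Q le q)"
proof
  assume "card (maximal_elements le I) = 1"
  then obtain q where q: "maximal_elements le I = {q}" by (rule card_1_singletonE)
  have IQ: "I \<subseteq> Q" using assms(3) by (rule order_ideals_subset)
  have qI: "q \<in> I" using q unfolding maximal_elements_def by blast
  have "le p q" if pI: "p \<in> I" for p
  proof -
    let ?S = "{x\<in>I. le p x}"
    have "finite ?S" "?S \<noteq> {}" "?S \<subseteq> Q"
      using finite_subset[OF IQ assms(1)] pI IQ partial_order_on'_refl[OF assms(2)] by auto
    then obtain m where m: "m \<in> ?S" "\<forall>z\<in>?S. le m z \<longrightarrow> z = m"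
      using finite_has_maximal_wrt assms(2) by blast
    have "m \<in> maximal_elements le I"
      using m pI IQ partial_order_on'_trans[OF assms(2), of p m]
      unfolding maximal_elements_def by blast
    then show ?thesis using q m(1) by auto
  qed
  then have "I = principal_ideal Q le q"
    using order_ideals_downward[OF assms(3) qI] IQ unfolding principal_ideal_def by blast
  then show "\<exists>q\<in>Q. I = principal_ideal Q le q" using qI IQ by blast
qed (use maximal_elements_principal_ideal[OF assms(2)] in auto)

lemma lower_covers_image:
  assumes h: "bij_betw h (order_ideals Q le) (order_ideals Q' le')"
    "\<forall>I\<in>order_ideals Q le. \<forall>K\<in>order_ideals Q le. I \<subseteq> K \<longleftrightarrow> h I \<subseteq> h K"
    and I: "I \<in> order_ideals Q le"
  shows "lower_covers Q' le' (h I) = h ` lower_covers Q le I"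
proof -
  let ?J = "order_ideals Q le" and ?J' = "order_ideals Q' le'"
  have J': "?J' = h ` ?J" using h(1) by (simp add: bij_betw_def)
  have "h K = h L \<longleftrightarrow> K = L" if "K \<in> ?J" "L \<in> ?J" for K L
    using h(1) that by (auto simp: bij_betw_def inj_on_def)
  then have psub: "K \<subset> L \<longleftrightarrow> h K \<subset> h L" if "K \<in> ?J" "L \<in> ?J" for K L
    using h(2) that unfolding psubset_eq by blast
  have cover: "h K \<in> lower_covers Q' le' (h I) \<longleftrightarrow> K \<in> lower_covers Q le I" if K: "K \<in> ?J" for K
  proof -
    have "(\<exists>L\<in>?J'. h K \<subset> L \<and> L \<subset> h I) \<longleftrightarrow> (\<exists>L\<in>?J. K \<subset> L \<and> L \<subset> I)"
      unfolding J' using psub[OF K] psub[OF _ I] by auto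
    then show ?thesis unfolding lower_covers_def J' using K I psub by auto
  qed
  have sub: "lower_covers Q' le' (h I) \<subseteq> h ` ?J" unfolding lower_covers_def J' by blast
  show ?thesis
  proof (intro set_eqI iffI)
    fix A assume A: "A \<in> lower_covers Q' le' (h I)"
    then obtain K where "K \<in> ?J" "A = h K" using sub by blast
    then show "A \<in> h ` lower_covers Q le I" using cover A by blast
  next
    fix A assume "A \<in> h ` lower_covers Q le I"
    then obtain K where K: "K \<in> lower_covers Q le I" "A = h K" by blast
    then have "K \<in> ?J" by (simp add: lower_covers_def)
    then show "A \<in> lower_covers Q' le' (h I)" using cover K by simp
  qed
qed

lemma card_maximal_elements_image:
  assumes Q: "finite Q" "partial_order_on' Q le" and Q': "finite Q'" "partial_order_on' Q' le'"
    and h: "bij_betw h (order_ideals Q le) (order_ideals Q' le')"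
    "\<forall>I\<in>order_ideals Q le. \<forall>K\<in>order_ideals Q le. I \<subseteq> K \<longleftrightarrow> h I \<subseteq> h K"
    and I: "I \<in> order_ideals Q le"
  shows "card (maximal_elements le' (h I)) = card (maximal_elements le I)"
proof -
  have hI: "h I \<in> order_ideals Q' le'" using h(1) I by (simp add: bij_betwE)
  have "inj_on h (lower_covers Q le I)"
    using h(1) by (auto simp: bij_betw_def lower_covers_def intro: inj_on_subset)
  then have "card (lower_covers Q' le' (h I)) = card (lower_covers Q le I)"
    unfolding lower_covers_image[OF h I] by (rule card_image)
  then show ?thesis unfolding card_lower_covers[OF Q I] card_lower_covers[OF Q' hI] .
qed

text \<open>\<open>Q\<close> is determined by \<open>J(Q)\<close>: an isomorphism of ideal lattices preserves the number of
  lower covers, hence maps principal ideals to principal ideals.\<close>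

lemma poset_iso_if_iso_order_ideals:
  assumes Q: "finite Q" "partial_order_on' Q le" and Q': "finite Q'" "partial_order_on' Q' le'"
    and "poset_iso (order_ideals Q le) (\<subseteq>) (order_ideals Q' le') (\<subseteq>)"
  shows "poset_iso Q le Q' le'"
proof -
  let ?J = "order_ideals Q le" and ?J' = "order_ideals Q' le'"
  let ?pr = "principal_ideal Q le" and ?pr' = "principal_ideal Q' le'"
  obtain h where h: "bij_betw h ?J ?J'" "\<forall>I\<in>?J. \<forall>K\<in>?J. I \<subseteq> K \<longleftrightarrow> h I \<subseteq> h K"
    using assms(5) by (auto simp: poset_iso_def)
  have principal: "h I \<in> ?pr' ` Q' \<longleftrightarrow> I \<in> ?pr ` Q" if "I \<in> ?J" for I
    using card_maximal_elements_eq_1_iff[OF Q that]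
      card_maximal_elements_eq_1_iff[OF Q' bij_betw_apply[OF h(1) that]]
      card_maximal_elements_image[OF Q Q' h that] by auto
  define \<phi> where "\<phi> q = inv_into Q' ?pr' (h (?pr q))" for q
  have \<phi>: "\<phi> q \<in> Q'" "?pr' (\<phi> q) = h (?pr q)" if "q \<in> Q" for q
  proof -
    have "h (?pr q) \<in> ?pr' ` Q'"
      using principal principal_ideal_in_order_ideals[OF Q(2) that] that by blast
    then show "\<phi> q \<in> Q'" "?pr' (\<phi> q) = h (?pr q)"
      unfolding \<phi>_def by (simp_all add: inv_into_into f_inv_into_f)
  qed
  have le: "le x y \<longleftrightarrow> le' (\<phi> x) (\<phi> y)" if "x \<in> Q" "y \<in> Q" for x y
    using principal_ideal_subset_iff[OF Q(2) that] principal_ideal_subset_iff[OF Q'(2) \<phi>(1) \<phi>(1)]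
      h(2) principal_ideal_in_order_ideals[OF Q(2)] \<phi>(2) that by simp
  have "inj_on \<phi> Q"
    using le Q(2) Q'(2) by (intro inj_onI) (metis \<phi>(1) partial_order_on'_antisym partial_order_on'_refl)
  moreover have "\<phi> ` Q = Q'"
  proof (intro subset_antisym subsetI)
    fix q' assume q': "q' \<in> Q'"
    obtain I where I: "I \<in> ?J" "h I = ?pr' q'"
      using h(1) principal_ideal_in_order_ideals[OF Q'(2) q'] unfolding bij_betw_def by (metis imageE)
    have "I \<in> ?pr ` Q" using principal[OF I(1)] I(2) q' by simp
    then obtain q where q: "q \<in> Q" "I = ?pr q" by blast
    then have "\<phi> q = q'" using \<phi> I principal_ideal_inject[OF Q'(2)] q' by metis
    then show "q' \<in> \<phi> ` Q" using q(1) by blast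
  qed (use \<phi> in blast)
  ultimately show ?thesis unfolding poset_iso_def bij_betw_def using le by blast
qed

text \<open>\<open>Q0\<close> embeds into the carrier type of \<open>P \<cong> J(Q0)\<close> through the principal ideals; this is
  how the theorem obtains a \<open>Q\<close> living in the same type as \<open>P\<close>.\<close>

lemma ex_poset_iso_same_type:
  fixes P :: "'a set"
  assumes "partial_order_on' Q0 le0" "poset_iso P le (order_ideals Q0 le0) (\<subseteq>)"
  shows "\<exists>(Q :: 'a set) leQ. poset_iso Q0 le0 Q leQ"
proof -
  obtain f where f: "bij_betw f P (order_ideals Q0 le0)"
    using assms(2) by (auto simp: poset_iso_def)
  define e where "e q = inv_into P f (principal_ideal Q0 le0 q)" for q
  have "inj_on e Q0"
  proof (rule inj_onI)
    fix x y assume xy: "x \<in> Q0" "y \<in> Q0" "e x = e y"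
    then have "principal_ideal Q0 le0 x = principal_ideal Q0 le0 y"
      using principal_ideal_in_order_ideals[OF assms(1)] bij_betw_inv_into_right[OF f]
      unfolding e_def by metis
    then show "x = y" using principal_ideal_inject[OF assms(1)] xy by blast
  qed
  then have "poset_iso Q0 le0 (e ` Q0) (\<lambda>a b. le0 (inv_into Q0 e a) (inv_into Q0 e b))"
    unfolding poset_iso_def bij_betw_def by auto
  then show ?thesis by blast
qed

lemma minuscule_conclusion_if_iso_order_ideals:
  fixes P :: "'a set" and le :: "'a \<Rightarrow> 'a \<Rightarrow> bool" and Q0 :: "'c set"
  assumes Q0: "finite Q0" "partial_order_on' Q0 le0" and "ddeg_toggle_expansion Q0 le0 c C"
    and P: "poset_iso P le (order_ideals Q0 le0) (\<subseteq>)"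
  shows "distributive_lattice_on P le \<and>
    (\<exists>(Q :: 'a set) leQ. finite_poset Q leQ \<and>
       poset_iso P le (order_ideals Q leQ) (\<subseteq>) \<and>
       (\<forall>(Q' :: 'b set) leQ'. finite_poset Q' leQ' \<and>
          poset_iso P le (order_ideals Q' leQ') (\<subseteq>) \<longrightarrow> poset_iso Q leQ Q' leQ') \<and>
       tCDE Q leQ)"
proof -
  obtain Q :: "'a set" and leQ where iso: "poset_iso Q0 le0 Q leQ"
    using ex_poset_iso_same_type[OF Q0(2) P] by blast
  have Q: "finite Q" "partial_order_on' Q leQ"
    using poset_iso_finite[OF poset_iso_sym[OF iso] Q0(1)]
      poset_iso_partial_order_on'[OF poset_iso_sym[OF iso] Q0(2)] by auto
  have PQ: "poset_iso P le (order_ideals Q leQ) (\<subseteq>)"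
    using poset_iso_trans[OF P poset_iso_order_ideals[OF iso]] .
  obtain c' where "ddeg_toggle_expansion Q leQ c' C"
    using ddeg_toggle_expansion_transfer[OF iso Q0 assms(3)] by blast
  then have "tCDE Q leQ" using Q by (intro tCDE_if_ddeg_toggle_expansion)
  moreover have "poset_iso Q leQ Q' leQ'"
    if "finite_poset Q' leQ'" "poset_iso P le (order_ideals Q' leQ') (\<subseteq>)" for Q' :: "'b set" and leQ'
    using poset_iso_if_iso_order_ideals[OF Q] poset_iso_trans[OF poset_iso_sym[OF PQ] that(2)] that(1)
    unfolding finite_poset_def by blast
  ultimately show ?thesis
    using distributive_lattice_on_if_iso_order_ideals[OF P] Q PQ unfolding finite_poset_def by blast
qed

section \<open>Products of two chains\<close>

lemma downward_closed_nat_set_eq: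
  fixes S :: "nat set"
  assumes "S \<subseteq> {m..<n}" "\<forall>i\<in>S. \<forall>k. m \<le> k \<and> k \<le> i \<longrightarrow> k \<in> S" "m \<le> n"
  shows "\<exists>t. m \<le> t \<and> t \<le> n \<and> S = {m..<t}"
proof (cases "S = {}")
  case True
  then show ?thesis using assms(3) by auto
next
  case False
  have fin: "finite S" using assms(1) finite_subset by blast
  have max: "Max S \<in> S" using Max_in[OF fin False] .
  have "S = {m..<Suc (Max S)}"
  proof
    show "S \<subseteq> {m..<Suc (Max S)}" using Max_ge[OF fin] assms(1) by fastforce
    show "{m..<Suc (Max S)} \<subseteq> S" using assms(2) max by auto
  qed
  moreover have "m \<le> Suc (Max S)" "Suc (Max S) \<le> n" using max assms(1) by auto
  ultimately show ?thesis by blast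
qed

text \<open>\<open>axes a b\<close> is the disjoint union of chains with \<open>a - 1\<close> and \<open>b - 1\<close> elements, placed on
  the two coordinate axes so that \<^const>\<open>prod_le\<close> orders it; its ideals are the \<open>axes s t\<close>.\<close>

definition axes :: "nat \<Rightarrow> nat \<Rightarrow> (nat \<times> nat) set" where
  "axes s t = (\<lambda>i. (i, 0)) ` {1..<s} \<union> (\<lambda>j. (0, j)) ` {1..<t}"

lemma mem_axes: "(i, j) \<in> axes s t \<longleftrightarrow> (j = 0 \<and> 1 \<le> i \<and> i < s) \<or> (i = 0 \<and> 1 \<le> j \<and> j < t)"
  unfolding axes_def by auto

lemma finite_axes: "finite (axes a b)"
  by (simp add: axes_def)

lemma axes_swap: "prod.swap ` axes s t = axes t s"
  unfolding axes_def image_Un image_image by (simp add: Un_commute)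

lemma prod_le_swap: "prod_le (prod.swap p) (prod.swap q) \<longleftrightarrow> prod_le p q"
  by (auto simp: prod_le_def)

lemma axes_subset_iff:
  assumes "1 \<le> s" "1 \<le> t" "1 \<le> s'" "1 \<le> t'"
  shows "axes s t \<subseteq> axes s' t' \<longleftrightarrow> s \<le> s' \<and> t \<le> t'"
proof
  assume sub: "axes s t \<subseteq> axes s' t'"
  have "s - 1 < s'" if "2 \<le> s" using subsetD[OF sub, of "(s - 1, 0)"] that by (simp add: mem_axes)
  moreover have "t - 1 < t'" if "2 \<le> t" using subsetD[OF sub, of "(0, t - 1)"] that by (simp add: mem_axes)
  ultimately show "s \<le> s' \<and> t \<le> t'" using assms by linarith
qed (auto simp: subset_iff mem_axes)

lemma axes_in_order_ideals:
  "s \<le> a \<Longrightarrow> t \<le> b \<Longrightarrow> axes s t \<in> order_ideals (axes a b) prod_le"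
  by (auto simp: order_ideals_def mem_axes prod_le_def)

lemma order_ideals_axes:
  assumes I: "I \<in> order_ideals (axes a b) prod_le" and "1 \<le> a" "1 \<le> b"
  shows "\<exists>s t. 1 \<le> s \<and> s \<le> a \<and> 1 \<le> t \<and> t \<le> b \<and> I = axes s t"
proof -
  have IQ: "I \<subseteq> axes a b" using I by (rule order_ideals_subset)
  let ?S = "{i. (i, 0) \<in> I}" and ?T = "{j. (0, j) \<in> I}"
  have sub: "?S \<subseteq> {1..<a}" "?T \<subseteq> {1..<b}" using IQ by (auto simp: mem_axes)
  have "k \<in> ?S" if "i \<in> ?S" "1 \<le> k" "k \<le> i" for i k
    using order_ideals_downward[OF I, of "(i, 0)" "(k, 0)"] that sub by (auto simp: mem_axes prod_le_def)
  moreover have "k \<in> ?T" if "j \<in> ?T" "1 \<le> k" "k \<le> j" for j k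
    using order_ideals_downward[OF I, of "(0, j)" "(0, k)"] that sub by (auto simp: mem_axes prod_le_def)
  ultimately obtain s t where st: "1 \<le> s" "s \<le> a" "?S = {1..<s}" "1 \<le> t" "t \<le> b" "?T = {1..<t}"
    using downward_closed_nat_set_eq[OF sub(1)] downward_closed_nat_set_eq[OF sub(2)] assms(2,3)
    by meson
  have "I = axes s t"
  proof (rule set_eqI)
    fix p :: "nat \<times> nat"
    obtain i j where p: "p = (i, j)" by fastforce
    show "p \<in> I \<longleftrightarrow> p \<in> axes s t"
      using subsetD[OF IQ, of p] st(3,6) unfolding p by (auto simp: mem_axes set_eq_iff)
  qed
  then show ?thesis using st by blast
qed

lemma poset_iso_chain_prod_axes:
  assumes "1 \<le> a" "1 \<le> b"
  shows "poset_iso (chain_prod a b) prod_le (order_ideals (axes a b) prod_le) (\<subseteq>)"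
proof -
  let ?f = "\<lambda>p. axes (fst p) (snd p)"
  have le: "\<forall>x\<in>chain_prod a b. \<forall>y\<in>chain_prod a b. prod_le x y \<longleftrightarrow> ?f x \<subseteq> ?f y"
    by (simp add: chain_prod_def prod_le_def axes_subset_iff)
  have "inj_on ?f (chain_prod a b)"
  proof (rule inj_onI)
    fix x y assume "x \<in> chain_prod a b" "y \<in> chain_prod a b" "?f x = ?f y"
    then show "x = y"
      using le partial_order_on'_antisym[OF partial_order_on'_prod_le] by (metis order_refl)
  qed
  moreover have "?f ` chain_prod a b = order_ideals (axes a b) prod_le"
  proof (intro subset_antisym subsetI)
    fix I assume "I \<in> order_ideals (axes a b) prod_le"
    then obtain s t where "(s, t) \<in> chain_prod a b" "I = axes s t"
      using order_ideals_axes[OF _ assms] unfolding chain_prod_def by force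
    then show "I \<in> ?f ` chain_prod a b" by force
  qed (auto simp: chain_prod_def intro: axes_in_order_ideals)
  ultimately show ?thesis unfolding poset_iso_def bij_betw_def using le by blast
qed

lemma toggles_axes_fst:
  assumes "1 \<le> s" "s \<le> a" "1 \<le> i" "i < a"
  shows "toggle_minus (axes a b) prod_le (i, 0) (axes s t) = (if i + 1 = s then 1 else 0)"
    and "toggle_plus (axes a b) prod_le (i, 0) (axes s t) = (if i = s then 1 else 0)"
proof -
  let ?Q = "axes a b" and ?I = "axes s t"
  have "(i, 0) \<in> ?I \<and> (\<forall>p\<in>?I. prod_le (i, 0) p \<longrightarrow> p = (i, 0)) \<longleftrightarrow> i + 1 = s"
  proof
    assume max: "(i, 0) \<in> ?I \<and> (\<forall>p\<in>?I. prod_le (i, 0) p \<longrightarrow> p = (i, 0))"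
    show "i + 1 = s"
    proof (rule ccontr)
      assume "i + 1 \<noteq> s"
      then have "(i + 1, 0) \<in> ?I" using max by (simp add: mem_axes)
      then show False using max by (auto simp: prod_le_def)
    qed
  qed (use assms in \<open>auto simp: mem_axes prod_le_def\<close>)
  then show "toggle_minus ?Q prod_le (i, 0) ?I = (if i + 1 = s then 1 else 0)"
    unfolding toggle_minus_def by simp
  have "(i, 0) \<in> ?Q \<and> (i, 0) \<notin> ?I \<and> (\<forall>p\<in>?Q - ?I. prod_le p (i, 0) \<longrightarrow> p = (i, 0)) \<longleftrightarrow> i = s"
  proof
    assume min: "(i, 0) \<in> ?Q \<and> (i, 0) \<notin> ?I \<and> (\<forall>p\<in>?Q - ?I. prod_le p (i, 0) \<longrightarrow> p = (i, 0))"
    show "i = s"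
    proof (rule ccontr)
      assume "i \<noteq> s"
      then have "(s, 0) \<in> ?Q - ?I" "s < i" using min assms by (auto simp: mem_axes)
      moreover from min have "\<forall>p\<in>?Q - ?I. prod_le p (i, 0) \<longrightarrow> p = (i, 0)" by blast
      ultimately have "prod_le (s, 0) (i, 0) \<longrightarrow> s = i" by blast
      with \<open>s < i\<close> show False by (simp add: prod_le_def)
    qed
  qed (use assms in \<open>auto simp: mem_axes prod_le_def\<close>)
  then show "toggle_plus ?Q prod_le (i, 0) ?I = (if i = s then 1 else 0)"
    unfolding toggle_plus_def by simp
qed

lemma toggles_axes_snd:
  assumes "1 \<le> t" "t \<le> b" "s \<le> a" "1 \<le> j" "j < b"
  shows "toggle_minus (axes a b) prod_le (0, j) (axes s t) = (if j + 1 = t then 1 else 0)"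
    and "toggle_plus (axes a b) prod_le (0, j) (axes s t) = (if j = t then 1 else 0)"
proof -
  have swap: "bij_betw prod.swap (axes b a) (axes a b)"
    using axes_swap by (simp add: bij_betw_def)
  have "\<forall>x\<in>axes b a. \<forall>y\<in>axes b a. prod_le x y \<longleftrightarrow> prod_le (prod.swap x) (prod.swap y)"
    by (simp add: prod_le_swap)
  note image = toggles_image[OF swap this axes_in_order_ideals[OF assms(2,3)], of "(j, 0)"]
  have "(j, 0) \<in> axes b a" using assms(4,5) by (simp add: mem_axes)
  then show "toggle_minus (axes a b) prod_le (0, j) (axes s t) = (if j + 1 = t then 1 else 0)"
    "toggle_plus (axes a b) prod_le (0, j) (axes s t) = (if j = t then 1 else 0)"
    using image toggles_axes_fst[OF assms(1,2,4,5)] by (simp_all add: axes_swap)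
qed

lemma sum_chain_toggles:
  assumes "1 \<le> s" "s \<le> n"
  shows "(\<Sum>i\<in>{1..<n}. (1 + (real i - n) / n) * (if i + 1 = s then 1 else 0)
           - (real i - n) / n * (if i = s then 1 else 0)) = (real n - 1) / n"
proof -
  let ?c = "\<lambda>i::nat. (real i - n) / n"
  have "(\<Sum>i\<in>{1..<n}. (1 + ?c i) * (if i + 1 = s then 1 else 0) - ?c i * (if i = s then 1 else 0))
      = (\<Sum>i\<in>{1..<n}. if i = s - 1 then 1 + ?c i else 0) - (\<Sum>i\<in>{1..<n}. if i = s then ?c i else 0)"
    unfolding sum_subtractf[symmetric] using assms by (intro sum.cong) auto
  also have "\<dots> = (if s - 1 \<in> {1..<n} then 1 + ?c (s - 1) else 0) - (if s \<in> {1..<n} then ?c s else 0)"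
    by (simp only: sum.delta[OF finite_atLeastLessThan])
  also have "\<dots> = (real n - 1) / n"
  proof -
    consider "s = 1" | "1 < s" "s < n" | "1 < s" "s = n" using assms by linarith
    then show ?thesis using assms by cases (auto simp: of_nat_diff field_simps)
  qed
  finally show ?thesis .
qed

lemma ddeg_toggle_expansion_axes:
  assumes "1 \<le> a" "1 \<le> b"
  shows "ddeg_toggle_expansion (axes a b) prod_le
    (\<lambda>(i, j). if j = 0 then (real i - a) / a else (real j - b) / b)
    ((real a - 1) / a + (real b - 1) / b)"
  unfolding ddeg_toggle_expansion_iff[OF finite_axes partial_order_on'_prod_le]
proof
  fix I assume "I \<in> order_ideals (axes a b) prod_le"
  then obtain s t where st: "1 \<le> s" "s \<le> a" "1 \<le> t" "t \<le> b" "I = axes s t"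
    using order_ideals_axes assms by blast
  let ?c = "\<lambda>(i, j). if j = 0 then (real i - a) / a else (real j - b) / b"
  let ?F = "\<lambda>q. (1 + ?c q) * toggle_minus (axes a b) prod_le q I - ?c q * toggle_plus (axes a b) prod_le q I"
  have "sum ?F (axes a b) = sum ?F ((\<lambda>i. (i, 0)) ` {1..<a}) + sum ?F ((\<lambda>j. (0, j)) ` {1..<b})"
    unfolding axes_def by (rule sum.union_disjoint) auto
  also have "\<dots> = (\<Sum>i\<in>{1..<a}. ?F (i, 0)) + (\<Sum>j\<in>{1..<b}. ?F (0, j))"
    by (simp add: sum.reindex inj_on_def)
  also have "(\<Sum>i\<in>{1..<a}. ?F (i, 0)) = (\<Sum>i\<in>{1..<a}. (1 + (real i - a) / a) *
      (if i + 1 = s then 1 else 0) - (real i - a) / a * (if i = s then 1 else 0))"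
    by (rule sum.cong) (simp_all add: st(5) toggles_axes_fst[OF st(1,2)])
  also have "\<dots> = (real a - 1) / a" using st(1,2) by (rule sum_chain_toggles)
  also have "(\<Sum>j\<in>{1..<b}. ?F (0, j)) = (\<Sum>j\<in>{1..<b}. (1 + (real j - b) / b) *
      (if j + 1 = t then 1 else 0) - (real j - b) / b * (if j = t then 1 else 0))"
    by (rule sum.cong) (simp_all add: st(5) toggles_axes_snd[OF st(3,4,2)])
  also have "\<dots> = (real b - 1) / b" using st(3,4) by (rule sum_chain_toggles)
  finally show "sum ?F (axes a b) = (real a - 1) / a + (real b - 1) / b" .
qed


section \<open>The Young interval \<open>[\<emptyset>, (b, b)]\<close>\<close>

text \<open>\<open>two_rows p r\<close> (for \<open>r \<le> p\<close>) is the ideal of \<open>2 \<times> b\<close> whose rows have lengths \<open>p\<close>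
  and \<open>r\<close>, i.e. the Young diagram of the partition \<open>(p, r)\<close>.\<close>

definition two_rows :: "nat \<Rightarrow> nat \<Rightarrow> (nat \<times> nat) set" where
  "two_rows p r = (\<lambda>j. (1, j)) ` {1..p} \<union> (\<lambda>j. (2, j)) ` {1..r}"

lemma mem_two_rows: "(i, j) \<in> two_rows p r \<longleftrightarrow> 1 \<le> j \<and> (i = 1 \<and> j \<le> p \<or> i = 2 \<and> j \<le> r)"
  unfolding two_rows_def by auto

lemma chain_prod_2_eq: "chain_prod 2 b = two_rows b b"
  by (auto simp: chain_prod_def mem_two_rows)

lemma finite_chain_prod: "finite (chain_prod a b)"
  by (simp add: chain_prod_def)

lemma two_rows_subset_iff: "two_rows p r \<subseteq> two_rows p' r' \<longleftrightarrow> p \<le> p' \<and> r \<le> r'"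
proof
  assume sub: "two_rows p r \<subseteq> two_rows p' r'"
  have "p \<le> p'" if "1 \<le> p" using subsetD[OF sub, of "(1, p)"] that by (simp add: mem_two_rows)
  moreover have "r \<le> r'" if "1 \<le> r" using subsetD[OF sub, of "(2, r)"] that by (simp add: mem_two_rows)
  ultimately show "p \<le> p' \<and> r \<le> r'" by linarith
qed (auto simp: two_rows_def)

lemma two_rows_in_order_ideals:
  "r \<le> p \<Longrightarrow> p \<le> b \<Longrightarrow> two_rows p r \<in> order_ideals (chain_prod 2 b) prod_le"
  by (auto simp: order_ideals_def chain_prod_2_eq mem_two_rows prod_le_def)

lemma order_ideals_two_rows:
  assumes I: "I \<in> order_ideals (chain_prod 2 b) prod_le"
  shows "\<exists>p r. r \<le> p \<and> p \<le> b \<and> I = two_rows p r"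
proof -
  have IQ: "I \<subseteq> two_rows b b" using order_ideals_subset[OF I] by (simp add: chain_prod_2_eq)
  have down: "(i', j') \<in> I" if "(i, j) \<in> I" "1 \<le> i'" "i' \<le> i" "1 \<le> j'" "j' \<le> j" for i j i' j'
    using order_ideals_downward[OF I that(1), of "(i', j')"] subsetD[OF IQ that(1)] that
    by (auto simp: chain_prod_def prod_le_def mem_two_rows)
  let ?row = "\<lambda>i. {j. (i, j) \<in> I}"
  have sub: "?row i \<subseteq> {1..<b + 1}" for i
  proof
    fix j assume "j \<in> ?row i"
    then have "(i, j) \<in> two_rows b b" using IQ by blast
    then show "j \<in> {1..<b + 1}" by (auto simp: mem_two_rows)
  qed
  have rows: "\<exists>t. 1 \<le> t \<and> t \<le> b + 1 \<and> ?row i = {1..<t}" if "1 \<le> i" for i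
  proof (rule downward_closed_nat_set_eq[OF sub])
    show "\<forall>j\<in>?row i. \<forall>k. 1 \<le> k \<and> k \<le> j \<longrightarrow> k \<in> ?row i"
      using down[of i _ i] that by auto
  qed simp
  obtain s where s: "?row 1 = {1..<s}" "s \<le> b + 1" using rows[of 1] by auto
  obtain t where t: "?row 2 = {1..<t}" using rows[of 2] by auto
  have row1: "(1, j) \<in> I \<longleftrightarrow> 1 \<le> j \<and> j \<le> s - 1"
    and row2: "(2, j) \<in> I \<longleftrightarrow> 1 \<le> j \<and> j \<le> t - 1" for j
    using s(1) t unfolding set_eq_iff by force+
  have "t - 1 \<le> s - 1"
  proof (rule ccontr)
    assume "\<not> t - 1 \<le> s - 1"
    then have "(2, t - 1) \<in> I" using row2 by simp
    then have "(1, t - 1) \<in> I" using down[of 2 "t - 1" 1 "t - 1"] \<open>\<not> t - 1 \<le> s - 1\<close> by simp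
    with \<open>\<not> t - 1 \<le> s - 1\<close> show False using row1 by simp
  qed
  moreover have "I = two_rows (s - 1) (t - 1)"
  proof (rule set_eqI)
    fix x :: "nat \<times> nat"
    obtain i j where x: "x = (i, j)" by fastforce
    consider "i = 1" | "i = 2" | "i \<noteq> 1" "i \<noteq> 2" by blast
    then show "x \<in> I \<longleftrightarrow> x \<in> two_rows (s - 1) (t - 1)"
    proof cases
      case 1
      show ?thesis unfolding x 1 row1 by (simp add: mem_two_rows)
    next
      case 2
      show ?thesis unfolding x 2 row2 by (simp add: mem_two_rows)
    next
      case 3
      then have "x \<notin> two_rows b b" by (simp add: x mem_two_rows)
      with 3 show ?thesis using IQ by (auto simp: x mem_two_rows)
    qed
  qed
  ultimately show ?thesis using s(2) by force
qed


definition partition2 :: "nat \<Rightarrow> nat \<Rightarrow> nat \<Rightarrow> nat" where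
  "partition2 p r = (\<lambda>k. if k = 0 then p else if k = 1 then r else 0)"

lemma young_interval_iff: "lam \<in> young_interval b \<longleftrightarrow> (\<exists>p r. r \<le> p \<and> p \<le> b \<and> lam = partition2 p r)"
proof
  assume "lam \<in> young_interval b"
  then have "antimono lam" and bound: "\<And>k. lam k \<le> (if k < 2 then b else 0)"
    unfolding young_interval_def by auto
  then have "lam 1 \<le> lam 0" "lam 0 \<le> b" using bound[of 0] by (auto dest: antimonoD)
  moreover have "lam = partition2 (lam 0) (lam 1)"
  proof
    fix k show "lam k = partition2 (lam 0) (lam 1) k"
      using bound[of k] by (auto simp: partition2_def)
  qed
  ultimately show "\<exists>p r. r \<le> p \<and> p \<le> b \<and> lam = partition2 p r" by blast
qed (auto simp: young_interval_def antimono_def partition2_def)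

lemma partition2_apply [simp]: "partition2 p r 0 = p" "partition2 p r (Suc 0) = r"
  by (simp_all add: partition2_def)

lemma partition2_le_iff: "partition2 p r \<le> partition2 p' r' \<longleftrightarrow> p \<le> p' \<and> r \<le> r'"
proof
  assume "partition2 p r \<le> partition2 p' r'"
  then have "partition2 p r 0 \<le> partition2 p' r' 0" "partition2 p r (Suc 0) \<le> partition2 p' r' (Suc 0)"
    by (metis le_funD)+
  then show "p \<le> p' \<and> r \<le> r'" by simp
qed (simp add: le_fun_def partition2_def)

lemma poset_iso_young_interval_two_rows:
  "poset_iso (young_interval b) (\<le>) (order_ideals (chain_prod 2 b) prod_le) (\<subseteq>)"
proof -
  let ?f = "\<lambda>lam. two_rows (lam 0) (lam 1)"
  have f: "?f (partition2 p r) = two_rows p r" for p r by simp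
  have le: "\<forall>x\<in>young_interval b. \<forall>y\<in>young_interval b. x \<le> y \<longleftrightarrow> ?f x \<subseteq> ?f y"
    by (auto simp: young_interval_iff partition2_le_iff two_rows_subset_iff)
  have "inj_on ?f (young_interval b)"
  proof (rule inj_onI)
    fix x y assume "x \<in> young_interval b" "y \<in> young_interval b" "?f x = ?f y"
    then have "x \<le> y" "y \<le> x" using le by simp_all
    then show "x = y" by (rule order_antisym)
  qed
  moreover have "?f ` young_interval b = order_ideals (chain_prod 2 b) prod_le"
  proof (intro subset_antisym subsetI)
    fix I assume "I \<in> order_ideals (chain_prod 2 b) prod_le"
    then obtain p r where "r \<le> p" "p \<le> b" "I = two_rows p r" using order_ideals_two_rows by blast
    then have "partition2 p r \<in> young_interval b" "I = ?f (partition2 p r)"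
      by (auto simp: young_interval_iff)
    then show "I \<in> ?f ` young_interval b" by (intro rev_image_eqI[where f = ?f])
  qed (use two_rows_in_order_ideals in \<open>auto simp: young_interval_iff\<close>)
  ultimately show ?thesis unfolding poset_iso_def bij_betw_def using le by blast
qed


lemma toggles_two_rows_fst:
  assumes "r \<le> p" "p \<le> b" "1 \<le> j" "j \<le> b"
  shows "toggle_minus (chain_prod 2 b) prod_le (1, j) (two_rows p r) = (if j = p \<and> r < p then 1 else 0)"
    and "toggle_plus (chain_prod 2 b) prod_le (1, j) (two_rows p r) = (if j = p + 1 then 1 else 0)"
proof -
  note defs = chain_prod_2_eq mem_two_rows prod_le_def
  show "toggle_minus (chain_prod 2 b) prod_le (1, j) (two_rows p r) = (if j = p \<and> r < p then 1 else 0)"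
  proof (cases "j = p \<and> r < p")
    case True
    then show ?thesis by (simp, intro toggle_minus_eq_1I) (auto simp: defs)
  next
    case False
    consider "p < j" | "j < p" | "j = p" "r = p" using assms False by linarith
    then show ?thesis
    proof cases
      case 1
      then show ?thesis using False by (simp add: toggle_minus_eq_0I_notin mem_two_rows)
    next
      case 2
      then show ?thesis using False assms by (simp add: toggle_minus_eq_0I_above[of "(1, j + 1)"] defs)
    next
      case 3
      then show ?thesis using False assms by (simp add: toggle_minus_eq_0I_above[of "(2, j)"] defs)
    qed
  qed
  show "toggle_plus (chain_prod 2 b) prod_le (1, j) (two_rows p r) = (if j = p + 1 then 1 else 0)"
  proof (cases "j = p + 1")
    case True
    then show ?thesis using assms by (simp, intro toggle_plus_eq_1I) (auto simp: defs)
  next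
    case False
    then consider "j \<le> p" | "p + 1 < j" by linarith
    then show ?thesis
    proof cases
      case 1
      then show ?thesis using False assms by (simp add: toggle_plus_eq_0I_mem mem_two_rows)
    next
      case 2
      then show ?thesis using False assms by (simp add: toggle_plus_eq_0I_below[of "(1, p + 1)"] defs)
    qed
  qed
qed

lemma toggles_two_rows_snd:
  assumes "r \<le> p" "p \<le> b" "1 \<le> j" "j \<le> b"
  shows "toggle_minus (chain_prod 2 b) prod_le (2, j) (two_rows p r) = (if j = r then 1 else 0)"
    and "toggle_plus (chain_prod 2 b) prod_le (2, j) (two_rows p r) = (if j = r + 1 \<and> r < p then 1 else 0)"
proof -
  note defs = chain_prod_2_eq mem_two_rows prod_le_def
  show "toggle_minus (chain_prod 2 b) prod_le (2, j) (two_rows p r) = (if j = r then 1 else 0)"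
  proof (cases "j = r")
    case True
    then show ?thesis using assms by (simp, intro toggle_minus_eq_1I) (auto simp: defs)
  next
    case False
    then consider "r < j" | "j < r" by linarith
    then show ?thesis
    proof cases
      case 1
      then show ?thesis using False by (simp add: toggle_minus_eq_0I_notin mem_two_rows)
    next
      case 2
      then show ?thesis using False assms by (simp add: toggle_minus_eq_0I_above[of "(2, j + 1)"] defs)
    qed
  qed
  show "toggle_plus (chain_prod 2 b) prod_le (2, j) (two_rows p r) = (if j = r + 1 \<and> r < p then 1 else 0)"
  proof (cases "j = r + 1 \<and> r < p")
    case True
    then show ?thesis using assms by (simp, intro toggle_plus_eq_1I) (auto simp: defs)
  next
    case False
    consider "j \<le> r" | "r + 1 < j" | "j = r + 1" "r = p" using assms False by linarith
    then show ?thesis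
    proof cases
      case 1
      then show ?thesis using False assms by (simp add: toggle_plus_eq_0I_mem mem_two_rows)
    next
      case 2
      then show ?thesis using False assms by (simp add: toggle_plus_eq_0I_below[of "(2, r + 1)"] defs)
    next
      case 3
      then show ?thesis using False assms by (simp add: toggle_plus_eq_0I_below[of "(1, j)"] defs)
    qed
  qed
qed

lemma sum_two_deltas:
  fixes c :: "'a \<Rightarrow> real"
  assumes "finite S"
  shows "(\<Sum>j\<in>S. (1 + c j) * (if j = u \<and> P then 1 else 0) - c j * (if j = v \<and> R then 1 else 0))
       = (if u \<in> S \<and> P then 1 + c u else 0) - (if v \<in> S \<and> R then c v else 0)"
proof -
  have "(\<Sum>j\<in>S. (1 + c j) * (if j = u \<and> P then 1 else 0) - c j * (if j = v \<and> R then 1 else 0))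
      = (\<Sum>j\<in>S. if j = u then (if P then 1 + c j else 0) else 0)
        - (\<Sum>j\<in>S. if j = v then (if R then c j else 0) else 0)"
    unfolding sum_subtractf[symmetric] by (rule sum.cong) auto
  then show ?thesis unfolding sum.delta[OF assms] by auto
qed

lemma ddeg_toggle_expansion_chain_prod_2:
  "ddeg_toggle_expansion (chain_prod 2 b) prod_le
    (\<lambda>(i, j). if i = 1 then (2 * real j - 2 * b - 2) / (b + 2) else (2 * real j - b - 2) / (b + 2))
    (2 * real b / (b + 2))"
proof -
  let ?Q = "chain_prod 2 b"
  define c1 where "c1 j = (2 * real j - 2 * b - 2) / (b + 2)" for j :: nat
  define c2 where "c2 j = (2 * real j - b - 2) / (b + 2)" for j :: nat
  let ?c = "\<lambda>(i, j). if i = 1 then c1 j else c2 j"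
  have "(\<Sum>q\<in>?Q. (1 + ?c q) * toggle_minus ?Q prod_le q I - ?c q * toggle_plus ?Q prod_le q I)
      = 2 * real b / (b + 2)" if I: "I \<in> order_ideals ?Q prod_le" for I
  proof -
    obtain p r where pr: "r \<le> p" "p \<le> b" "I = two_rows p r"
      using order_ideals_two_rows[OF I] by blast
    let ?F = "\<lambda>q. (1 + ?c q) * toggle_minus ?Q prod_le q I - ?c q * toggle_plus ?Q prod_le q I"
    have "sum ?F ?Q = (\<Sum>j\<in>{1..b}. ?F (1, j)) + (\<Sum>j\<in>{1..b}. ?F (2, j))"
      unfolding chain_prod_2_eq two_rows_def
      by (subst sum.union_disjoint) (auto simp: sum.reindex inj_on_def)
    also have "(\<Sum>j\<in>{1..b}. ?F (1, j)) = (\<Sum>j\<in>{1..b}. (1 + c1 j) * (if j = p \<and> r < p then 1 else 0)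
        - c1 j * (if j = p + 1 \<and> True then 1 else 0))"
      using toggles_two_rows_fst[OF pr(1,2)] by (intro sum.cong) (simp_all add: pr(3))
    also have "\<dots> = (if p \<in> {1..b} \<and> r < p then 1 + c1 p else 0) - (if p + 1 \<in> {1..b} then c1 (p + 1) else 0)"
      by (subst sum_two_deltas) simp_all
    also have "(\<Sum>j\<in>{1..b}. ?F (2, j)) = (\<Sum>j\<in>{1..b}. (1 + c2 j) * (if j = r \<and> True then 1 else 0)
        - c2 j * (if j = r + 1 \<and> r < p then 1 else 0))"
      using toggles_two_rows_snd[OF pr(1,2)] by (intro sum.cong) (simp_all add: pr(3))
    also have "\<dots> = (if r \<in> {1..b} then 1 + c2 r else 0) - (if r + 1 \<in> {1..b} \<and> r < p then c2 (r + 1) else 0)"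
      by (subst sum_two_deltas) simp_all
    also have "(if p \<in> {1..b} \<and> r < p then 1 + c1 p else 0) - (if p + 1 \<in> {1..b} then c1 (p + 1) else 0)
        + ((if r \<in> {1..b} then 1 + c2 r else 0) - (if r + 1 \<in> {1..b} \<and> r < p then c2 (r + 1) else 0))
        = 2 * real b / (b + 2)"
      using pr(1,2) unfolding c1_def c2_def
      by (cases "r < p"; cases "p < b"; cases "r = 0") (auto simp: divide_simps add_pos_nonneg)
    finally show ?thesis .
  qed
  then show ?thesis
    using ddeg_toggle_expansion_iff[OF finite_chain_prod partial_order_on'_prod_le]
    unfolding c1_def c2_def by blast
qed
section \<open>The posets \<open>P\<^sub>a\<^sub>,\<^sub>1\<^sub>,\<^sub>1\<^sub>,\<^sub>a\<close>\<close>

fun pelt_le :: "pelt \<Rightarrow> pelt \<Rightarrow> bool" where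
  "pelt_le (W i) (W j) = (i \<le> j)"
| "pelt_le (W i) X = True"
| "pelt_le (W i) Y = True"
| "pelt_le (W i) (Z j) = True"
| "pelt_le X X = True"
| "pelt_le X (Z j) = True"
| "pelt_le Y Y = True"
| "pelt_le Y (Z j) = True"
| "pelt_le (Z i) (Z j) = (i \<le> j)"
| "pelt_le _ _ = False"

lemma pelt_le_refl: "pelt_le u u"
  by (cases u) auto

lemma pelt_le_trans: "pelt_le u v \<Longrightarrow> pelt_le v w \<Longrightarrow> pelt_le u w"
  by (cases u; cases v; cases w) auto

lemma pelt_le_antisym: "pelt_le u v \<Longrightarrow> pelt_le v u \<Longrightarrow> u = v"
  by (cases u; cases v) auto

lemma ball_pelt: "(\<forall>p\<in>S. P p) \<longleftrightarrow> (\<forall>k. W k \<in> S \<longrightarrow> P (W k)) \<and> (X \<in> S \<longrightarrow> P X) \<and> (Y \<in> S \<longrightarrow> P Y) \<and> (\<forall>k. Z k \<in> S \<longrightarrow> P (Z k))"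
  by (metis pelt.exhaust)

lemma cover_a11a_pelt_le: "cover_a11a a y z \<Longrightarrow> pelt_le u y \<Longrightarrow> pelt_le u z"
  unfolding cover_a11a_def by (cases u) auto

lemma le_a11a_imp_pelt_le: "le_a11a a u v \<Longrightarrow> pelt_le u v"
  unfolding le_a11a_def
proof (induction rule: rtranclp_induct)
  case base then show ?case by (rule pelt_le_refl)
next
  case (step y z) then show ?case using cover_a11a_pelt_le by blast
qed

lemma le_a11a_trans: "le_a11a a u v \<Longrightarrow> le_a11a a v w \<Longrightarrow> le_a11a a u w"
  unfolding le_a11a_def by (rule rtranclp_trans)

lemma le_a11a_if_cover: "cover_a11a a u v \<Longrightarrow> le_a11a a u v"
  unfolding le_a11a_def by simp

lemma le_a11a_W: "i \<le> j \<Longrightarrow> 1 \<le> i \<Longrightarrow> j \<le> a \<Longrightarrow> le_a11a a (W i) (W j)"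
proof (induction j rule: dec_induct)
  case (step n)
  then have "cover_a11a a (W n) (W (Suc n))" unfolding cover_a11a_def by auto
  with step show ?case by (auto intro: le_a11a_trans le_a11a_if_cover)
qed (simp add: le_a11a_def)

lemma le_a11a_Z: "i \<le> j \<Longrightarrow> 1 \<le> i \<Longrightarrow> j \<le> a \<Longrightarrow> le_a11a a (Z i) (Z j)"
proof (induction j rule: dec_induct)
  case (step n)
  then have "cover_a11a a (Z n) (Z (Suc n))" unfolding cover_a11a_def by auto
  with step show ?case by (auto intro: le_a11a_trans le_a11a_if_cover)
qed (simp add: le_a11a_def)

lemma mem_P_a11a: "u \<in> P_a11a a \<longleftrightarrow> (\<exists>i. u = W i \<and> 1 \<le> i \<and> i \<le> a) \<or> u = X \<or> u = Y \<or> (\<exists>i. u = Z i \<and> 1 \<le> i \<and> i \<le> a)"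
  unfolding P_a11a_def by auto

lemma le_a11a_iff:
  assumes "1 \<le> a" "u \<in> P_a11a a" "v \<in> P_a11a a"
  shows "le_a11a a u v \<longleftrightarrow> pelt_le u v"
proof
  assume uv: "pelt_le u v"
  have W_X: "le_a11a a (W i) X" and W_Y: "le_a11a a (W i) Y" if "1 \<le> i" "i \<le> a" for i
    using le_a11a_W[OF that(2,1) order_refl] le_a11a_if_cover[of a "W a"] le_a11a_trans
    unfolding cover_a11a_def by blast+
  have X_Z: "le_a11a a X (Z j)" and Y_Z: "le_a11a a Y (Z j)" if "1 \<le> j" "j \<le> a" for j
    using le_a11a_Z[OF that(1) order_refl that(2)] le_a11a_if_cover[of a _ "Z 1"] le_a11a_trans
    unfolding cover_a11a_def by blast+
  show "le_a11a a u v"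
  proof (cases u)
    case (W i)
    then have i: "1 \<le> i" "i \<le> a" using assms(2) mem_P_a11a by auto
    show ?thesis
    proof (cases v)
      case (W j)
      then show ?thesis using uv i \<open>u = W i\<close> assms(3) mem_P_a11a le_a11a_W by auto
    next
      case (Z j)
      then have "1 \<le> j" "j \<le> a" using assms(3) mem_P_a11a by auto
      then show ?thesis using W_X[OF i] X_Z Z \<open>u = W i\<close> le_a11a_trans by blast
    qed (use W_X W_Y i \<open>u = W i\<close> in simp_all)
  next
    case X
    then show ?thesis using uv assms(3) mem_P_a11a X_Z unfolding le_a11a_def by (cases v) auto
  next
    case Y
    then show ?thesis using uv assms(3) mem_P_a11a Y_Z unfolding le_a11a_def by (cases v) auto
  next
    case (Z i)
    then have "1 \<le> i" using assms(2) mem_P_a11a by auto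
    then show ?thesis using uv Z assms(3) mem_P_a11a le_a11a_Z by (cases v) auto
  qed
qed (rule le_a11a_imp_pelt_le)

text \<open>\<open>Q_a11a a\<close> is \<open>P\<^sub>a\<^sub>-\<^sub>1\<^sub>,\<^sub>1\<^sub>,\<^sub>1\<^sub>,\<^sub>a\<^sub>-\<^sub>1\<close> with indices shifted by one (the
  two-element antichain \<open>{X, Y}\<close> when \<open>a = 1\<close>); the isomorphism \<open>P_a11a a \<cong> J(Q_a11a a)\<close> sends
  \<open>v\<close> to the elements of \<open>Q_a11a a\<close> below it.\<close>

definition Q_a11a :: "nat \<Rightarrow> pelt set" where
  "Q_a11a a = W ` {2..a} \<union> {X, Y} \<union> Z ` {2..a}"

lemma mem_Q_a11a [simp]:
  "W k \<in> Q_a11a a \<longleftrightarrow> 2 \<le> k \<and> k \<le> a" "X \<in> Q_a11a a" "Y \<in> Q_a11a a" "Z k \<in> Q_a11a a \<longleftrightarrow> 2 \<le> k \<and> k \<le> a"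
  unfolding Q_a11a_def by auto

lemma finite_Q_a11a: "finite (Q_a11a a)"
  by (simp add: Q_a11a_def)

lemma partial_order_on'_pelt_le: "partial_order_on' A pelt_le"
  unfolding partial_order_on'_def using pelt_le_refl pelt_le_trans pelt_le_antisym by blast

lemma principal_ideal_Q_a11a_in_order_ideals:
  "principal_ideal (Q_a11a a) pelt_le v \<in> order_ideals (Q_a11a a) pelt_le"
  unfolding order_ideals_def principal_ideal_def using pelt_le_trans by blast

lemma pelt_le_iff_principal_ideal_subset:
  assumes "u \<in> P_a11a a" "v \<in> P_a11a a"
  shows "pelt_le u v \<longleftrightarrow> principal_ideal (Q_a11a a) pelt_le u \<subseteq> principal_ideal (Q_a11a a) pelt_le v"
    (is "_ \<longleftrightarrow> ?D u \<subseteq> ?D v")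
proof
  assume "pelt_le u v"
  then show "?D u \<subseteq> ?D v" unfolding principal_ideal_def using pelt_le_trans by blast
next
  assume sub: "?D u \<subseteq> ?D v"
  show "pelt_le u v"
  proof (cases "u \<in> Q_a11a a")
    case True
    then have "u \<in> ?D u" by (simp add: mem_principal_ideal pelt_le_refl)
    then show ?thesis using sub by (auto simp: mem_principal_ideal)
  next
    case False
    then consider "u = W 1" | "u = Z 1" using assms(1) unfolding mem_P_a11a by fastforce
    then show ?thesis
    proof cases
      case 2
      then have "pelt_le X v" "pelt_le Y v"
        using subsetD[OF sub, of X] subsetD[OF sub, of Y] by (simp_all add: mem_principal_ideal)
      then obtain j where "v = Z j" by (cases v) auto
      then show ?thesis using 2 assms(2) unfolding mem_P_a11a by auto
    qed (use assms(2) in \<open>auto simp: mem_P_a11a\<close>)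
  qed
qed

lemma order_ideals_Q_a11a_chain:
  assumes I: "I \<in> order_ideals (Q_a11a a) pelt_le" and "1 \<le> a" and C: "C = W \<or> C = Z"
  shows "\<exists>m. 1 \<le> m \<and> m \<le> a \<and> (\<forall>k. C k \<in> I \<longleftrightarrow> 2 \<le> k \<and> k \<le> m)"
proof -
  have IQ: "I \<subseteq> Q_a11a a" using I by (rule order_ideals_subset)
  have sub: "{k. C k \<in> I} \<subseteq> {2..<a + 1}"
  proof
    fix k assume "k \<in> {k. C k \<in> I}"
    then have "C k \<in> Q_a11a a" using IQ by blast
    then show "k \<in> {2..<a + 1}" using C by auto
  qed
  have down: "C k \<in> I" if "C j \<in> I" "2 \<le> k" "k \<le> j" for j k
  proof -
    have "C j \<in> Q_a11a a" using IQ that(1) by blast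
    then have "C k \<in> Q_a11a a" "pelt_le (C k) (C j)" using C that by auto
    then show ?thesis using order_ideals_downward[OF I that(1)] by blast
  qed
  have "\<exists>t. 2 \<le> t \<and> t \<le> a + 1 \<and> {k. C k \<in> I} = {2..<t}"
    by (rule downward_closed_nat_set_eq[OF sub]) (use down assms(2) in auto)
  then obtain t where t: "2 \<le> t" "t \<le> a + 1" "{k. C k \<in> I} = {2..<t}" by blast
  have "C k \<in> I \<longleftrightarrow> k \<in> {2..<t}" for k using t(3) by (metis mem_Collect_eq)
  moreover have "k \<in> {2..<t} \<longleftrightarrow> 2 \<le> k \<and> k \<le> t - 1" for k using t(1) by auto
  ultimately have "\<forall>k. C k \<in> I \<longleftrightarrow> 2 \<le> k \<and> k \<le> t - 1" by blast
  moreover have "1 \<le> t - 1" "t - 1 \<le> a" using t(1,2) by simp_all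
  ultimately show ?thesis by blast
qed

lemma order_ideals_Q_a11a:
  assumes a: "1 \<le> a" and I: "I \<in> order_ideals (Q_a11a a) pelt_le"
  shows "\<exists>v\<in>P_a11a a. I = principal_ideal (Q_a11a a) pelt_le v"
proof -
  have IQ: "I \<subseteq> Q_a11a a" using I by (rule order_ideals_subset)
  have down: "y \<in> I" if "x \<in> I" "y \<in> Q_a11a a" "pelt_le y x" for x y
    using order_ideals_downward[OF I] that by blast
  have Z_XY: "X \<in> I" "Y \<in> I" if "Z k \<in> I" for k using down[OF that] by auto
  have XY_W: "W k \<in> I \<longleftrightarrow> 2 \<le> k \<and> k \<le> a" if "X \<in> I \<or> Y \<in> I" for k
    using that down[of X "W k"] down[of Y "W k"] subsetD[OF IQ, of "W k"] by auto
  obtain mW where mW: "1 \<le> mW" "mW \<le> a" "\<forall>k. W k \<in> I \<longleftrightarrow> 2 \<le> k \<and> k \<le> mW"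
    using order_ideals_Q_a11a_chain[OF I a] by blast
  obtain mZ where mZ: "1 \<le> mZ" "mZ \<le> a" "\<forall>k. Z k \<in> I \<longleftrightarrow> 2 \<le> k \<and> k \<le> mZ"
    using order_ideals_Q_a11a_chain[OF I a] by blast
  have "\<exists>v\<in>P_a11a a. \<forall>q. q \<in> I \<longleftrightarrow> q \<in> Q_a11a a \<and> pelt_le q v"
  proof (cases "X \<in> I"; cases "Y \<in> I")
    assume "X \<in> I" "Y \<in> I"
    then have "q \<in> I \<longleftrightarrow> q \<in> Q_a11a a \<and> pelt_le q (Z mZ)" for q
      using mZ XY_W by (cases q) auto
    moreover have "Z mZ \<in> P_a11a a" using mZ(1,2) by (simp add: mem_P_a11a)
    ultimately show ?thesis by blast
  next
    assume "X \<in> I" "Y \<notin> I"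
    then have "q \<in> I \<longleftrightarrow> q \<in> Q_a11a a \<and> pelt_le q X" for q
      using Z_XY XY_W by (cases q) auto
    moreover have "X \<in> P_a11a a" by (simp add: mem_P_a11a)
    ultimately show ?thesis by blast
  next
    assume "X \<notin> I" "Y \<in> I"
    then have "q \<in> I \<longleftrightarrow> q \<in> Q_a11a a \<and> pelt_le q Y" for q
      using Z_XY XY_W by (cases q) auto
    moreover have "Y \<in> P_a11a a" by (simp add: mem_P_a11a)
    ultimately show ?thesis by blast
  next
    assume "X \<notin> I" "Y \<notin> I"
    then have "q \<in> I \<longleftrightarrow> q \<in> Q_a11a a \<and> pelt_le q (W mW)" for q
      using mW Z_XY by (cases q) auto
    moreover have "W mW \<in> P_a11a a" using mW(1,2) by (simp add: mem_P_a11a)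
    ultimately show ?thesis by blast
  qed
  then show ?thesis by (auto simp: mem_principal_ideal)
qed

lemma poset_iso_P_a11a:
  assumes "1 \<le> a"
  shows "poset_iso (P_a11a a) (le_a11a a) (order_ideals (Q_a11a a) pelt_le) (\<subseteq>)"
proof -
  let ?D = "principal_ideal (Q_a11a a) pelt_le"
  have le: "\<forall>x\<in>P_a11a a. \<forall>y\<in>P_a11a a. le_a11a a x y \<longleftrightarrow> ?D x \<subseteq> ?D y"
    using le_a11a_iff[OF assms] pelt_le_iff_principal_ideal_subset by blast
  have "inj_on ?D (P_a11a a)"
  proof (rule inj_onI)
    fix x y assume "x \<in> P_a11a a" "y \<in> P_a11a a" "?D x = ?D y"
    then have "pelt_le x y" "pelt_le y x" using pelt_le_iff_principal_ideal_subset by auto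
    then show "x = y" by (rule pelt_le_antisym)
  qed
  moreover have "?D ` P_a11a a = order_ideals (Q_a11a a) pelt_le"
    using principal_ideal_Q_a11a_in_order_ideals order_ideals_Q_a11a[OF assms] by blast
  ultimately show ?thesis unfolding poset_iso_def bij_betw_def using le by blast
qed

lemma sum_Q_a11a: "sum f (Q_a11a a) = (\<Sum>k\<in>{2..a}. f (W k)) + f X + f Y + (\<Sum>k\<in>{2..a}. f (Z k))"
proof -
  have "sum f (Q_a11a a) = sum f (W ` {2..a} \<union> {X, Y}) + sum f (Z ` {2..a})"
    unfolding Q_a11a_def by (rule sum.union_disjoint) auto
  also have "sum f (W ` {2..a} \<union> {X, Y}) = sum f (W ` {2..a}) + f X + f Y"
    by (subst sum.union_disjoint) (auto simp: add.assoc)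
  finally show ?thesis by (simp add: sum.reindex inj_on_def)
qed

lemma toggles_principal_ideal_W:
  assumes "1 \<le> m" "m \<le> a"
  shows "(\<Sum>k\<in>{2..a}. toggle_plus (Q_a11a a) pelt_le (W k) (principal_ideal (Q_a11a a) pelt_le (W m)))
      = (if m < a then 1 else 0)"
    and "toggle_plus (Q_a11a a) pelt_le X (principal_ideal (Q_a11a a) pelt_le (W m)) = (if m = a then 1 else 0)"
    and "toggle_plus (Q_a11a a) pelt_le Y (principal_ideal (Q_a11a a) pelt_le (W m)) = (if m = a then 1 else 0)"
proof -
  let ?I = "principal_ideal (Q_a11a a) pelt_le (W m)"
  have "toggle_plus (Q_a11a a) pelt_le (W k) ?I = (if k = m + 1 then 1 else 0)" if k: "k \<in> {2..a}" for k
  proof -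
    consider "k \<le> m" | "k = m + 1" | "m + 1 < k" using k by linarith
    then show ?thesis
    proof cases
      case 1
      then show ?thesis using k by (auto simp: mem_principal_ideal intro: toggle_plus_eq_0I_mem)
    next
      case 2
      then show ?thesis using k
        by (simp, intro toggle_plus_eq_1I) (auto simp: mem_principal_ideal ball_pelt)
    next
      case 3
      then show ?thesis using k assms
        by (auto simp: mem_principal_ideal intro: toggle_plus_eq_0I_below[of "W (m + 1)"])
    qed
  qed
  then have "(\<Sum>k\<in>{2..a}. toggle_plus (Q_a11a a) pelt_le (W k) ?I) = (\<Sum>k\<in>{2..a}. if k = m + 1 then 1 else 0)"
    by (intro sum.cong) simp_all
  also have "\<dots> = (if m < a then 1 else 0)" using assms by (simp add: sum.delta)
  finally show "(\<Sum>k\<in>{2..a}. toggle_plus (Q_a11a a) pelt_le (W k) ?I) = (if m < a then 1 else 0)" .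
  show "toggle_plus (Q_a11a a) pelt_le X ?I = (if m = a then 1 else 0)"
    "toggle_plus (Q_a11a a) pelt_le Y ?I = (if m = a then 1 else 0)"
  proof (atomize (full), cases "m = a")
    case True
    then show "toggle_plus (Q_a11a a) pelt_le X ?I = (if m = a then 1 else 0) \<and>
        toggle_plus (Q_a11a a) pelt_le Y ?I = (if m = a then 1 else 0)"
      by (simp, intro conjI toggle_plus_eq_1I) (auto simp: mem_principal_ideal ball_pelt)
  next
    case False
    then show "toggle_plus (Q_a11a a) pelt_le X ?I = (if m = a then 1 else 0) \<and>
        toggle_plus (Q_a11a a) pelt_le Y ?I = (if m = a then 1 else 0)"
      using assms by (auto simp: mem_principal_ideal intro: toggle_plus_eq_0I_below[of "W (m + 1)"])
  qed
qed

lemma toggles_principal_ideal_Z: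
  assumes "1 \<le> m" "m \<le> a"
  shows "(\<Sum>k\<in>{2..a}. toggle_minus (Q_a11a a) pelt_le (Z k) (principal_ideal (Q_a11a a) pelt_le (Z m)))
      = (if 2 \<le> m then 1 else 0)"
    and "toggle_minus (Q_a11a a) pelt_le X (principal_ideal (Q_a11a a) pelt_le (Z m)) = (if m = 1 then 1 else 0)"
    and "toggle_minus (Q_a11a a) pelt_le Y (principal_ideal (Q_a11a a) pelt_le (Z m)) = (if m = 1 then 1 else 0)"
proof -
  let ?I = "principal_ideal (Q_a11a a) pelt_le (Z m)"
  have "toggle_minus (Q_a11a a) pelt_le (Z k) ?I = (if k = m then 1 else 0)" if k: "k \<in> {2..a}" for k
  proof -
    consider "m < k" | "k = m" | "k < m" by linarith
    then show ?thesis
    proof cases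
      case 1
      then show ?thesis using k by (auto simp: mem_principal_ideal intro: toggle_minus_eq_0I_notin)
    next
      case 2
      then show ?thesis using k
        by (simp, intro toggle_minus_eq_1I) (auto simp: mem_principal_ideal ball_pelt)
    next
      case 3
      then show ?thesis using k assms
        by (auto simp: mem_principal_ideal intro: toggle_minus_eq_0I_above[of "Z (k + 1)"])
    qed
  qed
  then have "(\<Sum>k\<in>{2..a}. toggle_minus (Q_a11a a) pelt_le (Z k) ?I) = (\<Sum>k\<in>{2..a}. if k = m then 1 else 0)"
    by (intro sum.cong) simp_all
  also have "\<dots> = (if 2 \<le> m then 1 else 0)" using assms by (simp add: sum.delta')
  finally show "(\<Sum>k\<in>{2..a}. toggle_minus (Q_a11a a) pelt_le (Z k) ?I) = (if 2 \<le> m then 1 else 0)" .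
  show "toggle_minus (Q_a11a a) pelt_le X ?I = (if m = 1 then 1 else 0)"
    "toggle_minus (Q_a11a a) pelt_le Y ?I = (if m = 1 then 1 else 0)"
  proof (atomize (full), cases "m = 1")
    case True
    then show "toggle_minus (Q_a11a a) pelt_le X ?I = (if m = 1 then 1 else 0) \<and>
        toggle_minus (Q_a11a a) pelt_le Y ?I = (if m = 1 then 1 else 0)"
      by (simp, intro conjI toggle_minus_eq_1I) (auto simp: mem_principal_ideal ball_pelt)
  next
    case False
    then show "toggle_minus (Q_a11a a) pelt_le X ?I = (if m = 1 then 1 else 0) \<and>
        toggle_minus (Q_a11a a) pelt_le Y ?I = (if m = 1 then 1 else 0)"
      using assms by (auto simp: mem_principal_ideal intro: toggle_minus_eq_0I_above[of "Z m"])
  qed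
qed

lemma ddeg_toggle_expansion_Q_a11a:
  assumes "1 \<le> a"
  shows "ddeg_toggle_expansion (Q_a11a a) pelt_le
    (\<lambda>q. case q of W _ \<Rightarrow> -1 | X \<Rightarrow> -1/2 | Y \<Rightarrow> -1/2 | Z _ \<Rightarrow> 0) 1"
  unfolding ddeg_toggle_expansion_iff[OF finite_Q_a11a partial_order_on'_pelt_le]
proof
  fix I assume "I \<in> order_ideals (Q_a11a a) pelt_le"
  then obtain v where v: "v \<in> P_a11a a" "I = principal_ideal (Q_a11a a) pelt_le v"
    using order_ideals_Q_a11a[OF assms] by blast
  let ?Tm = "\<lambda>q. toggle_minus (Q_a11a a) pelt_le q I" and ?Tp = "\<lambda>q. toggle_plus (Q_a11a a) pelt_le q I"
  let ?c = "\<lambda>q. case q of W _ \<Rightarrow> -1 | X \<Rightarrow> -1/2 | Y \<Rightarrow> -1/2 | Z _ \<Rightarrow> (0::real)"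
  have "(\<Sum>q\<in>Q_a11a a. (1 + ?c q) * ?Tm q - ?c q * ?Tp q)
      = (\<Sum>k\<in>{2..a}. ?Tp (W k)) + (?Tm X + ?Tp X) / 2 + (?Tm Y + ?Tp Y) / 2 + (\<Sum>k\<in>{2..a}. ?Tm (Z k))"
    unfolding sum_Q_a11a by (simp add: add_divide_distrib add.assoc)
  also have "\<dots> = 1"
  proof -
    have mem: "q \<in> I \<longleftrightarrow> q \<in> Q_a11a a \<and> pelt_le q v" for q by (simp add: v(2) mem_principal_ideal)
    consider m where "v = W m" "1 \<le> m" "m \<le> a" | "v = X" | "v = Y" | m where "v = Z m" "1 \<le> m" "m \<le> a"
      using v(1) unfolding mem_P_a11a by blast
    then show ?thesis
    proof cases
      case (1 m)
      have I: "principal_ideal (Q_a11a a) pelt_le (W m) = I" using v(2) 1(1) by simp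
      have "?Tm X = 0" "?Tm Y = 0" "(\<Sum>k\<in>{2..a}. ?Tm (Z k)) = 0"
        using 1 by (auto simp: mem intro!: toggle_minus_eq_0I_notin sum.neutral)
      then show ?thesis using toggles_principal_ideal_W[OF 1(2,3), unfolded I] 1(3) by simp
    next
      case 2
      then show ?thesis
        by (simp add: sum.neutral mem toggle_minus_eq_0I_notin toggle_plus_eq_0I_mem
            toggle_minus_eq_1I toggle_plus_eq_1I ball_pelt)
    next
      case 3
      then show ?thesis
        by (simp add: sum.neutral mem toggle_minus_eq_0I_notin toggle_plus_eq_0I_mem
            toggle_minus_eq_1I toggle_plus_eq_1I ball_pelt)
    next
      case (4 m)
      have I: "principal_ideal (Q_a11a a) pelt_le (Z m) = I" using v(2) 4(1) by simp
      have "?Tp X = 0" "?Tp Y = 0" "(\<Sum>k\<in>{2..a}. ?Tp (W k)) = 0"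
        using 4 by (auto simp: mem intro!: toggle_plus_eq_0I_mem sum.neutral)
      then show ?thesis using toggles_principal_ideal_Z[OF 4(2,3), unfolded I] 4(2) by simp
    qed
  qed
  finally show "(\<Sum>q\<in>Q_a11a a. (1 + ?c q) * ?Tm q - ?c q * ?Tp q) = 1" .
qed

section \<open>The posets \<open>P(E\<^sub>6)\<close> and \<open>P(E\<^sub>7)\<close>\<close>

definition ideals_list_step :: "('a \<Rightarrow> 'a \<Rightarrow> bool) \<Rightarrow> 'a \<Rightarrow> 'a list \<Rightarrow> 'a list list \<Rightarrow> 'a list list" where
  "ideals_list_step le m ms r = r @ map (Cons m) (filter (\<lambda>I. \<forall>p\<in>set ms. le p m \<longrightarrow> p \<in> set I) r)"

fun ideals_list :: "('a \<Rightarrow> 'a \<Rightarrow> bool) \<Rightarrow> 'a list \<Rightarrow> 'a list list" where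
  "ideals_list le [] = [[]]"
| "ideals_list le (m # ms) = ideals_list_step le m ms (ideals_list le ms)"

fun maximal_first :: "('a \<Rightarrow> 'a \<Rightarrow> bool) \<Rightarrow> 'a list \<Rightarrow> bool" where
  "maximal_first le [] = True"
| "maximal_first le (m # ms) = ((\<forall>p\<in>set ms. \<not> le m p) \<and> maximal_first le ms)"

lemma maximal_first_distinct: "partial_order_on' (set L) le \<Longrightarrow> maximal_first le L \<Longrightarrow> distinct L"
proof (induction L)
  case Nil then show ?case by simp
next
  case (Cons m ms)
  have "partial_order_on' (set ms) le" using partial_order_on'_subset[OF Cons.prems(1)] by auto
  moreover have "m \<notin> set ms" using Cons.prems partial_order_on'_refl[OF Cons.prems(1), of m] by auto
  ultimately show ?case using Cons by auto
qed

lemma order_ideals_insert_maximal: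
  assumes mx: "\<forall>p\<in>S. \<not> le m p" and mS: "m \<notin> S"
  shows "order_ideals (insert m S) le
    = order_ideals S le \<union> insert m ` {I \<in> order_ideals S le. {p\<in>S. le p m} \<subseteq> I}"
proof (intro subset_antisym subsetI)
  fix I assume I: "I \<in> order_ideals (insert m S) le"
  have J: "I - {m} \<in> order_ideals S le" using I mS unfolding order_ideals_def by blast
  have below: "{p\<in>S. le p m} \<subseteq> I - {m}" if "m \<in> I" using I that mS unfolding order_ideals_def by blast
  show "I \<in> order_ideals S le \<union> insert m ` {I \<in> order_ideals S le. {p\<in>S. le p m} \<subseteq> I}"
  proof (cases "m \<in> I")
    case True
    then have "I = insert m (I - {m})" by blast
    then show ?thesis using J below[OF True] by (intro UnI2 rev_image_eqI[of "I - {m}"]) auto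
  qed (use J in simp)
next
  fix I assume "I \<in> order_ideals S le \<union> insert m ` {I \<in> order_ideals S le. {p\<in>S. le p m} \<subseteq> I}"
  then show "I \<in> order_ideals (insert m S) le" using mx unfolding order_ideals_def by blast
qed

lemma order_ideals_eq_ideals_list: "partial_order_on' (set L) le \<Longrightarrow> maximal_first le L \<Longrightarrow> order_ideals (set L) le = set (map set (ideals_list le L))"
proof (induction L)
  case Nil then show ?case by (auto simp: order_ideals_def)
next
  case (Cons m ms)
  have pos: "partial_order_on' (set ms) le" using partial_order_on'_subset[OF Cons.prems(1)] by auto
  have mx: "\<forall>p\<in>set ms. \<not> le m p" and ok: "maximal_first le ms" using Cons.prems by auto
  have mS: "m \<notin> set ms" using mx partial_order_on'_refl[OF Cons.prems(1), of m] by auto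
  have IH: "order_ideals (set ms) le = set (map set (ideals_list le ms))" using Cons.IH[OF pos ok] .
  have "order_ideals (set (m # ms)) le = order_ideals (set ms) le \<union> insert m ` {I \<in> order_ideals (set ms) le. {p\<in>set ms. le p m} \<subseteq> I}"
    using order_ideals_insert_maximal[of "set ms" le m] mx mS by simp
  also have "\<dots> = set (map set (ideals_list le (m # ms)))"
    unfolding IH by (auto simp: image_iff ideals_list_step_def)
  finally show ?case .
qed

lemma ddeg_toggle_expansion_listI:
  assumes "partial_order_on' (set L) le" "maximal_first le L"
    and "\<forall>I\<in>set (ideals_list le L). (\<Sum>q\<leftarrow>L. (1 + c q) * toggle_minus (set L) le q (set I)
            - c q * toggle_plus (set L) le q (set I)) = C"
  shows "ddeg_toggle_expansion (set L) le c C"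
  unfolding ddeg_toggle_expansion_iff[OF finite_set assms(1)] order_ideals_eq_ideals_list[OF assms(1,2)]
  using assms(3) unfolding sum_list_distinct_conv_sum_set[OF maximal_first_distinct[OF assms(1,2)]]
  by auto

definition delta4_list :: "(nat \<times> nat) list" where
  "delta4_list = [(4,4),(3,4),(3,3),(2,4),(2,3),(1,4),(2,2),(1,3),(1,2),(1,1)]"

lemma shifted_delta4_eq: "shifted_delta4 = set delta4_list"
proof
  show "shifted_delta4 \<subseteq> set delta4_list"
  proof
    fix x assume "x \<in> shifted_delta4"
    then obtain i j where ij: "x = (i, j)" "1 \<le> i" "i \<le> j" "j \<le> 4"
      unfolding shifted_delta4_def by auto
    then have "i \<in> {1, 2, 3, 4}" "j \<in> {1, 2, 3, 4}" by auto
    with ij show "x \<in> set delta4_list" unfolding delta4_list_def by auto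
  qed
qed (auto simp: delta4_list_def shifted_delta4_def)

lemma finite_shifted_delta4: "finite shifted_delta4"
  by (simp add: shifted_delta4_eq)

text \<open>The coefficients for \<open>P(E\<^sub>6)\<close> and \<open>P(E\<^sub>7)\<close> solve the linear system expressing
  \<open>ddeg\<close> in terms of the toggles; they are checked on every ideal by evaluation.\<close>

definition c_E6 :: "nat \<times> nat \<Rightarrow> real" where
  "c_E6 q = (if q = (1,1) then -5/4 else if q = (1,2) then -3/2 else if q = (1,3) then -1
     else if q = (1,4) then -1/2 else if q = (2,2) then -3/4 else if q = (2,3) then -1/2
     else if q = (2,4) then 0 else if q = (3,3) then -1/4 else if q = (3,4) then 1/2 else 1/4)"

lemma maximal_first_delta4: "maximal_first prod_le delta4_list"
  by (simp add: delta4_list_def prod_le_def)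

lemma ddeg_toggle_expansion_delta4: "ddeg_toggle_expansion shifted_delta4 prod_le c_E6 (5/4)"
  unfolding shifted_delta4_eq
  by (rule ddeg_toggle_expansion_listI[OF partial_order_on'_prod_le maximal_first_delta4]) code_simp

definition E6_ideals :: "(nat \<times> nat) list list" where
  "E6_ideals = [[],
    [(1,1)],
    [(1,2), (1,1)],
    [(1,3), (1,2), (1,1)],
    [(2,2), (1,2), (1,1)],
    [(2,2), (1,3), (1,2), (1,1)],
    [(1,4), (1,3), (1,2), (1,1)],
    [(1,4), (2,2), (1,3), (1,2), (1,1)],
    [(2,3), (2,2), (1,3), (1,2), (1,1)],
    [(2,3), (1,4), (2,2), (1,3), (1,2), (1,1)],
    [(2,4), (2,3), (1,4), (2,2), (1,3), (1,2), (1,1)],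
    [(3,3), (2,3), (2,2), (1,3), (1,2), (1,1)],
    [(3,3), (2,3), (1,4), (2,2), (1,3), (1,2), (1,1)],
    [(3,3), (2,4), (2,3), (1,4), (2,2), (1,3), (1,2), (1,1)],
    [(3,4), (3,3), (2,4), (2,3), (1,4), (2,2), (1,3), (1,2), (1,1)],
    [(4,4), (3,4), (3,3), (2,4), (2,3), (1,4), (2,2), (1,3), (1,2), (1,1)]]"

lemma ideals_list_delta4: "ideals_list prod_le delta4_list = E6_ideals"
  unfolding delta4_list_def E6_ideals_def by (simp add: prod_le_def ideals_list_step_def)

lemma PE6_eq_E6_ideals: "PE6 = set (map set E6_ideals)"
  unfolding PE6_def shifted_delta4_eq ideals_list_delta4[symmetric]
  by (rule order_ideals_eq_ideals_list[OF partial_order_on'_prod_le maximal_first_delta4])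

text \<open>\<open>P(E\<^sub>7) = J(P(E\<^sub>6))\<close> is computed with \<open>P(E\<^sub>6)\<close> encoded by the positions of its
  ideals in \<^const>\<open>E6_ideals\<close>; \<open>E6_up_sets ! i\<close> lists the positions of the ideals containing
  the \<open>i\<close>-th one.\<close>

definition E6_up_sets :: "nat list list" where
  "E6_up_sets = [[0,1,2,3,4,5,6,7,8,9,10,11,12,13,14,15],
    [1,2,3,4,5,6,7,8,9,10,11,12,13,14,15],
    [2,3,4,5,6,7,8,9,10,11,12,13,14,15],
    [3,5,6,7,8,9,10,11,12,13,14,15],
    [4,5,7,8,9,10,11,12,13,14,15],
    [5,7,8,9,10,11,12,13,14,15],
    [6,7,9,10,12,13,14,15],
    [7,9,10,12,13,14,15],
    [8,9,10,11,12,13,14,15],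
    [9,10,12,13,14,15],
    [10,13,14,15],
    [11,12,13,14,15],
    [12,13,14,15],
    [13,14,15],
    [14,15],
    [15]]"

definition le_E6_index :: "nat \<Rightarrow> nat \<Rightarrow> bool" where
  "le_E6_index i j \<longleftrightarrow> j \<in> set (E6_up_sets ! i)"

definition E6_indices :: "nat list" where
  "E6_indices = rev [0..<16]"

definition c_E7 :: "nat \<Rightarrow> real" where
  "c_E7 i = [-4/3, -5/3, -2, -4/3, -1, -1, -2/3, -1/3, -2/3, 0, 0, -1/3, 1/3, 1, 2/3, 1/3] ! i"

lemma poset_iso_E6_indices: "poset_iso (set E6_indices) le_E6_index PE6 (\<subseteq>)"
proof -
  let ?f = "\<lambda>i. set (E6_ideals ! i)"
  have len: "length E6_ideals = 16" and dist: "distinct (map set E6_ideals)"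
    unfolding E6_ideals_def by code_simp+
  have indices: "set E6_indices = {0..<16}" by (simp add: E6_indices_def)
  have "inj_on ?f {0..<16}" using dist len unfolding inj_on_def distinct_conv_nth by fastforce
  moreover have "?f ` {0..<16} = set ` ((!) E6_ideals ` {0..<16})" by (simp add: image_image)
  moreover have "(!) E6_ideals ` {0..<16} = set E6_ideals" using nth_image[of 16 E6_ideals] len by simp
  ultimately have "bij_betw ?f (set E6_indices) (set (map set E6_ideals))"
    unfolding indices bij_betw_def by simp
  moreover have "\<forall>i\<in>set E6_indices. \<forall>j\<in>set E6_indices. le_E6_index i j \<longleftrightarrow> ?f i \<subseteq> ?f j"
    unfolding E6_indices_def le_E6_index_def E6_up_sets_def E6_ideals_def by code_simp
  ultimately show ?thesis unfolding poset_iso_def PE6_eq_E6_ideals by blast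
qed

lemma poset_iso_PE7_order_ideals:
  "poset_iso PE7 (\<subseteq>) (order_ideals (set E6_indices) le_E6_index) (\<subseteq>)"
  unfolding PE7_def by (rule poset_iso_order_ideals[OF poset_iso_sym[OF poset_iso_E6_indices]])

lemma partial_order_on'_E6_indices: "partial_order_on' (set E6_indices) le_E6_index"
  using poset_iso_E6_indices partial_order_on'_subseteq by (rule poset_iso_partial_order_on')

lemma ddeg_toggle_expansion_E6_indices: "ddeg_toggle_expansion (set E6_indices) le_E6_index c_E7 (4/3)"
proof (rule ddeg_toggle_expansion_listI[OF partial_order_on'_E6_indices])
  show "maximal_first le_E6_index E6_indices"
    unfolding E6_indices_def le_E6_index_def E6_up_sets_def by code_simp
  show "\<forall>I\<in>set (ideals_list le_E6_index E6_indices). (\<Sum>q\<leftarrow>E6_indices. (1 + c_E7 q) *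
      toggle_minus (set E6_indices) le_E6_index q (set I) - c_E7 q * toggle_plus (set E6_indices) le_E6_index q (set I)) = 4 / 3"
    unfolding E6_indices_def le_E6_index_def E6_up_sets_def c_E7_def by code_simp
qed

theorem theorem6p3:
  fixes P :: "'a set" and le :: "'a \<Rightarrow> 'a \<Rightarrow> bool"
  assumes "connected_minuscule P le"
  shows "distributive_lattice_on P le \<and>
    (\<exists>(Q :: 'a set) leQ. finite_poset Q leQ \<and>
       poset_iso P le (order_ideals Q leQ) (\<subseteq>) \<and>
       (\<forall>(Q' :: 'b set) leQ'. finite_poset Q' leQ' \<and>
          poset_iso P le (order_ideals Q' leQ') (\<subseteq>) \<longrightarrow> poset_iso Q leQ Q' leQ') \<and>
       tCDE Q leQ)"
proof -
  note reduction = minuscule_conclusion_if_iso_order_ideals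
  consider (chain_prod) a b where "1 \<le> a" "1 \<le> b" "poset_iso P le (chain_prod a b) prod_le"
    | (young) b where "poset_iso P le (young_interval b) (\<le>)"
    | (a11a) a where "1 \<le> a" "poset_iso P le (P_a11a a) (le_a11a a)"
    | (E6) "poset_iso P le PE6 (\<subseteq>)"
    | (E7) "poset_iso P le PE7 (\<subseteq>)"
    using assms unfolding connected_minuscule_def by blast
  then show ?thesis
  proof cases
    case (chain_prod a b)
    show ?thesis
      by (rule reduction[OF finite_axes partial_order_on'_prod_le ddeg_toggle_expansion_axes[OF chain_prod(1,2)]
            poset_iso_trans[OF chain_prod(3) poset_iso_chain_prod_axes[OF chain_prod(1,2)]]])
  next
    case (young b)
    show ?thesis
      by (rule reduction[OF finite_chain_prod partial_order_on'_prod_le ddeg_toggle_expansion_chain_prod_2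
            poset_iso_trans[OF young poset_iso_young_interval_two_rows]])
  next
    case (a11a a)
    show ?thesis
      by (rule reduction[OF finite_Q_a11a partial_order_on'_pelt_le ddeg_toggle_expansion_Q_a11a[OF a11a(1)]
            poset_iso_trans[OF a11a(2) poset_iso_P_a11a[OF a11a(1)]]])
  next
    case E6
    show ?thesis
      by (rule reduction[OF finite_shifted_delta4 partial_order_on'_prod_le ddeg_toggle_expansion_delta4
            E6[unfolded PE6_def]])
  next
    case E7
    show ?thesis
      by (rule reduction[OF finite_set partial_order_on'_E6_indices ddeg_toggle_expansion_E6_indices
            poset_iso_trans[OF E7 poset_iso_PE7_order_ideals]])
  qed
qed

end
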